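(* Let $V_3$ be the subgroup of $P\Sigma_3$ generated by $\nu_{31},\nu_{32},\nu_{33}$, and $OP\Sigma_3=P\Sigma_3/V_3$. Then $V_3$ is a free group of rank $3$, $OP\Sigma_3$ is a free group of rank $3$ (generated by the images of $\xi_{1,2},\xi_{2,1},\xi_{1,3}$), and $P\Sigma_3=V_3\rtimes OP\Sigma_3$ is an almost-direct product, i.e. a semidirect product in which $OP\Sigma_3$ acts trivially on $V_3^{ab}$.
   Context: $F_3$ is the free group on $x_1,x_2,x_3$. For $i\neq j$, $\xi_{i,j}\in\mathrm{Aut}(F_3)$ is given by $\xi_{i,j}(x_i)=x_j^{-1}x_ix_j$ and $\xi_{i,j}(x_l)=x_l$ for $l\neq i$; $P\Sigma_3$ is the subgroup generated by all $\xi_{i,j}$. For $1\leq i\leq 3$, $\nu_{3i}$ is the inner automorphism $x_k\mapsto x_i^{-1}x_kx_i$ of $F_3$ (so $V_3=\mathrm{Inn}(F_3)$, which is normal in $P\Sigma_3$). *)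

theory Defs
  imports "HOL-Algebra.Algebra"
begin

text \<open>A letter (b, a) stands for x_a if b = False and for x_a inverse if b = True.\<close>

type_synonym letter = "bool \<times> nat"

definition inv_pair :: "letter \<Rightarrow> letter \<Rightarrow> bool" where
  "inv_pair l m \<longleftrightarrow> snd l = snd m \<and> fst l \<noteq> fst m"

fun red :: "letter list \<Rightarrow> letter list" where
  "red [] = []"
| "red (l # ls) = (case red ls of [] \<Rightarrow> [l]
                     | m # ms \<Rightarrow> (if inv_pair l m then ms else l # m # ms))"

definition reduced :: "letter list \<Rightarrow> bool" where
  "reduced w \<longleftrightarrow> (\<forall>i. Suc i < length w \<longrightarrow> \<not> inv_pair (w ! i) (w ! Suc i))"

definition FreeGroup :: "nat \<Rightarrow> letter list monoid" where
  "FreeGroup n = \<lparr>carrier = {w. reduced w \<and> (\<forall>l\<in>set w. snd l \<in> {1..n})},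
                  monoid.mult = (\<lambda>u v. red (u @ v)),
                  one = []\<rparr>"

definition gen :: "nat \<Rightarrow> letter list" where
  "gen a = [(False, a)]"

definition winv :: "letter list \<Rightarrow> letter list" where
  "winv w = rev (map (\<lambda>(b, a). (\<not> b, a)) w)"

definition subst :: "(nat \<Rightarrow> letter list) \<Rightarrow> letter list \<Rightarrow> letter list" where
  "subst f w = red (concat (map (\<lambda>(b, a). if b then winv (f a) else f a) w))"

abbreviation F3 :: "letter list monoid" where
  "F3 \<equiv> FreeGroup 3"

definition xi :: "nat \<Rightarrow> nat \<Rightarrow> letter list \<Rightarrow> letter list" where
  "xi i j = restrict
     (subst (\<lambda>l. if l = i then [(True, j), (False, i), (False, j)] else [(False, l)]))
     (carrier F3)"

definition nu :: "nat \<Rightarrow> letter list \<Rightarrow> letter list" where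
  "nu i = restrict (\<lambda>w. red (winv (gen i) @ w @ gen i)) (carrier F3)"

abbreviation AutF3 :: "(letter list \<Rightarrow> letter list) monoid" where
  "AutF3 \<equiv> AutoGroup F3"

definition PSigma3 :: "(letter list \<Rightarrow> letter list) monoid" where
  "PSigma3 = subgroup_generated AutF3
     {xi i j | i j. i \<in> {1..3} \<and> j \<in> {1..3} \<and> i \<noteq> j}"

definition V3 :: "(letter list \<Rightarrow> letter list) set" where
  "V3 = generate PSigma3 {nu 1, nu 2, nu 3}"

definition V3grp :: "(letter list \<Rightarrow> letter list) monoid" where
  "V3grp = subgroup_generated PSigma3 {nu 1, nu 2, nu 3}"

definition OPSigma3 :: "(letter list \<Rightarrow> letter list) set monoid" where
  "OPSigma3 = PSigma3 Mod V3"

end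

theory Submission
  imports Defs
begin

(* Every element of P\<Sigma>_3 sends each x_a to a conjugate g_a x_a g_a^-1, where g_a is
  determined up to right multiplication by a power of x_a because the centraliser of x_a is
  cyclic.  Conjugation t \<mapsto> (w \<mapsto> t w t^-1) maps F_3 isomorphically onto V_3 = Inn(F_3), as
  F_3 has trivial centre.  Spelling words in \<xi>_12, \<xi>_21, \<xi>_13 gives a homomorphism
  F_3 \<rightarrow> P\<Sigma>_3 whose image H is a complement of V_3.  On the one hand the relations
  \<nu>_1 = \<xi>_31 \<xi>_21, \<nu>_2 = \<xi>_32 \<xi>_12, \<nu>_3 = \<xi>_23 \<xi>_13 put every generator \<xi>_ij into V_3 H.
  On the other hand, writing u_k = g_1^-1 g_k, the difference of the exponents of the leading
  x_1-syllables of u_2 and u_3 does not depend on the choice of the g_a, vanishes for inner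
  automorphisms, and equals minus the exponent of the final x_2-syllable of W for the image of
  a reduced word W; a nonempty W not ending in x_2^\<plusminus>1 is first conjugated by x_2.  Hence
  H \<inter> V_3 = 1 and the homomorphism is injective.  Finally a basis-conjugating automorphism fixes
  every element of F_3 modulo [F_3, F_3], so P\<Sigma>_3 acts trivially on V_3^ab. *)

section \<open>Reduced words and free groups\<close>

definition inv_letter :: "letter \<Rightarrow> letter" where "inv_letter l = (\<not> fst l, snd l)"

lemma inv_pair_iff: "inv_pair l m \<longleftrightarrow> m = inv_letter l"
  by (cases l; cases m) (auto simp: inv_pair_def inv_letter_def)

lemma inv_pair_sym: "inv_pair l m \<longleftrightarrow> inv_pair m l"
  by (auto simp: inv_pair_def)

lemma inv_letter_inv_letter[simp]: "inv_letter (inv_letter l) = l" by (simp add: inv_letter_def)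
lemma snd_inv_letter[simp]: "snd (inv_letter l) = snd l" by (simp add: inv_letter_def)
lemma fst_inv_letter[simp]: "fst (inv_letter l) = (\<not> fst l)" by (simp add: inv_letter_def)

declare red.simps(2)[simp del]

definition cancel_cons :: "letter \<Rightarrow> letter list \<Rightarrow> letter list" where
  "cancel_cons l s = (case s of [] \<Rightarrow> [l] | m # ms \<Rightarrow> (if inv_pair l m then ms else l # m # ms))"

lemma red_Cons[simp]: "red (l # ls) = cancel_cons l (red ls)"
  by (simp add: cancel_cons_def red.simps(2))

lemma reduced_Nil[simp]: "reduced []" by (simp add: reduced_def)
lemma reduced_single[simp]: "reduced [l]" by (simp add: reduced_def)
lemma reduced_Cons2[simp]: "reduced (l # m # ms) \<longleftrightarrow> \<not> inv_pair l m \<and> reduced (m # ms)"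
proof
  assume h: "reduced (l # m # ms)"
  have "\<not> inv_pair l m" using h[unfolded reduced_def, rule_format, of 0] by simp
  moreover have "reduced (m # ms)" unfolding reduced_def
  proof (intro allI impI)
    fix i assume "Suc i < length (m # ms)"
    then show "\<not> inv_pair ((m # ms) ! i) ((m # ms) ! Suc i)"
      using h[unfolded reduced_def, rule_format, of "Suc i"] by simp
  qed
  ultimately show "\<not> inv_pair l m \<and> reduced (m # ms)" by simp
next
  assume h: "\<not> inv_pair l m \<and> reduced (m # ms)"
  show "reduced (l # m # ms)" unfolding reduced_def
  proof (intro allI impI)
    fix i assume i: "Suc i < length (l # m # ms)"
    show "\<not> inv_pair ((l # m # ms) ! i) ((l # m # ms) ! Suc i)"
    proof (cases i)
      case 0 then show ?thesis using h by simp
    next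
      case (Suc k) then show ?thesis using h i unfolding reduced_def by simp
    qed
  qed
qed

lemma reduced_Cons: "reduced (l # ms) \<longleftrightarrow> reduced ms \<and> (ms = [] \<or> \<not> inv_pair l (hd ms))"
  by (cases ms) auto

lemma reduced_append:
  "reduced (u @ v) \<longleftrightarrow> reduced u \<and> reduced v \<and> (u = [] \<or> v = [] \<or> \<not> inv_pair (last u) (hd v))"
proof (induction u)
  case Nil then show ?case by simp
next
  case (Cons x u)
  show ?case
  proof (cases u)
    case Nil then show ?thesis by (cases v) auto
  next
    case (Cons y w)
    then show ?thesis using Cons.IH by (auto simp: reduced_Cons)
  qed
qed

lemma reduced_cancel_cons: "reduced s \<Longrightarrow> reduced (cancel_cons l s)"
  by (cases s) (auto simp: cancel_cons_def reduced_Cons)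

lemma reduced_red: "reduced (red w)"
  by (induction w) (auto simp: red_Cons reduced_cancel_cons)

lemma red_reduced: "reduced w \<Longrightarrow> red w = w"
proof (induction w)
  case Nil then show ?case by simp
next
  case (Cons l ls)
  then have "red ls = ls" by (simp add: reduced_Cons)
  then show ?case using Cons.prems by (cases ls) (auto simp: red_Cons cancel_cons_def)
qed

lemma red_red[simp]: "red (red w) = red w"
  by (simp add: red_reduced reduced_red)

lemma cancel_cons_cancel: "reduced s \<Longrightarrow> cancel_cons l (cancel_cons (inv_letter l) s) = s"
  by (cases s) (auto simp: cancel_cons_def inv_pair_iff reduced_Cons split: list.splits)

lemma red_cancel_cons_append: "reduced r \<Longrightarrow> red (cancel_cons x r @ v) = cancel_cons x (red (r @ v))"
proof (cases r)
  case Nil then show ?thesis by (simp add: cancel_cons_def red_Cons)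
next
  case (Cons m ms)
  assume r: "reduced r"
  show ?thesis
  proof (cases "inv_pair x m")
    case True
    then have m: "m = inv_letter x" by (simp add: inv_pair_iff)
    have "cancel_cons x (red (r @ v)) = cancel_cons x (cancel_cons (inv_letter x) (red (ms @ v)))"
      using Cons m by (simp add: red_Cons)
    also have "\<dots> = red (ms @ v)" by (simp add: cancel_cons_cancel reduced_red)
    finally show ?thesis using Cons True by (simp add: cancel_cons_def)
  next
    case False
    then show ?thesis using Cons by (simp add: cancel_cons_def red_Cons)
  qed
qed

lemma red_append_left[simp]: "red (red u @ v) = red (u @ v)"
proof (induction u)
  case Nil then show ?case by simp
next
  case (Cons x u)
  have "red (red (x # u) @ v) = red (cancel_cons x (red u) @ v)" by (simp add: red_Cons)
  also have "\<dots> = cancel_cons x (red (red u @ v))"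
    by (simp add: red_cancel_cons_append reduced_red)
  also have "\<dots> = red (x # u @ v)" using Cons.IH by (simp add: red_Cons)
  finally show ?case by simp
qed

lemma red_append_right[simp]: "red (u @ red v) = red (u @ v)"
  by (induction u) (auto simp: red_Cons)

lemma red_append_mid: "red (a @ red b @ c) = red (a @ b @ c)"
proof -
  have "red (a @ red b @ c) = red (a @ red (red b @ c))" by (metis red_append_right)
  also have "\<dots> = red (a @ red (b @ c))" by simp
  finally show ?thesis by simp
qed

lemma set_cancel_cons: "set (cancel_cons l s) \<subseteq> insert l (set s)"
  by (cases s) (auto simp: cancel_cons_def)

lemma set_red: "set (red w) \<subseteq> set w"
proof (induction w)
  case Nil then show ?case by simp
next
  case (Cons l w) then show ?case using set_cancel_cons[of l "red w"] by (auto simp: red_Cons)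
qed

lemma winv_alt: "winv w = rev (map inv_letter w)"
  by (simp add: winv_def inv_letter_def case_prod_beta')

lemma winv_Nil[simp]: "winv [] = []" by (simp add: winv_alt)
lemma winv_Cons[simp]: "winv (l # w) = winv w @ [inv_letter l]" by (simp add: winv_alt)
lemma winv_append[simp]: "winv (u @ v) = winv v @ winv u" by (simp add: winv_alt)
lemma winv_winv[simp]: "winv (winv w) = w" by (simp add: winv_alt rev_map comp_def)
lemma set_winv: "set (winv w) = inv_letter ` set w" by (simp add: winv_alt)
lemma winv_eq_Nil[simp]: "winv w = [] \<longleftrightarrow> w = []" by (simp add: winv_alt)

lemma reduced_winv: "reduced w \<Longrightarrow> reduced (winv w)"
proof (induction w)
  case Nil then show ?case by simp
next
  case (Cons l w)
  then have rw: "reduced w" and h: "w = [] \<or> \<not> inv_pair l (hd w)"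
    by (auto simp: reduced_Cons)
  have lw: "w \<noteq> [] \<Longrightarrow> last (winv w) = inv_letter (hd w)"
    by (cases w) (auto simp: winv_alt)
  have "w \<noteq> [] \<Longrightarrow> \<not> inv_pair (last (winv w)) (inv_letter l)"
    using h lw by (auto simp: inv_pair_iff)
  then show ?case using Cons.IH[OF rw] 
    by (auto simp: reduced_append)
qed

lemma red_winv_right[simp]: "red (w @ winv w) = []"
proof (induction w)
  case Nil then show ?case by simp
next
  case (Cons x w)
  have "red (x # w @ winv w @ [inv_letter x]) = cancel_cons x (red ((w @ winv w) @ [inv_letter x]))"
    by (simp add: red_Cons)
  also have "red ((w @ winv w) @ [inv_letter x]) = red (red (w @ winv w) @ [inv_letter x])"
    by (metis red_append_left)
  also have "\<dots> = [inv_letter x]" using Cons.IH by (simp add: red_Cons cancel_cons_def)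
  finally show ?case by (simp add: cancel_cons_def inv_pair_iff)
qed

lemma red_winv_left[simp]: "red (winv w @ w) = []"
  using red_winv_right[of "winv w"] by simp

lemma carrier_FreeGroup: "carrier (FreeGroup n) = {w. reduced w \<and> (\<forall>l\<in>set w. snd l \<in> {1..n})}"
  by (simp add: FreeGroup_def)
lemma mult_FreeGroup: "u \<otimes>\<^bsub>FreeGroup n\<^esub> v = red (u @ v)"
  by (simp add: FreeGroup_def)
lemma one_FreeGroup: "\<one>\<^bsub>FreeGroup n\<^esub> = []"
  by (simp add: FreeGroup_def)

lemma group_FreeGroup: "group (FreeGroup n)"
proof (rule groupI)
  fix x y assume "x \<in> carrier (FreeGroup n)" "y \<in> carrier (FreeGroup n)"
  then show "x \<otimes>\<^bsub>FreeGroup n\<^esub> y \<in> carrier (FreeGroup n)"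
    using set_red[of "x @ y"] by (auto simp: carrier_FreeGroup reduced_red mult_FreeGroup)
next
  show "\<one>\<^bsub>FreeGroup n\<^esub> \<in> carrier (FreeGroup n)"
    by (simp add: carrier_FreeGroup one_FreeGroup)
next
  fix x y z
  show "x \<otimes>\<^bsub>FreeGroup n\<^esub> y \<otimes>\<^bsub>FreeGroup n\<^esub> z = x \<otimes>\<^bsub>FreeGroup n\<^esub> (y \<otimes>\<^bsub>FreeGroup n\<^esub> z)"
    by (simp add: mult_FreeGroup)
next
  fix x assume "x \<in> carrier (FreeGroup n)"
  then show "\<one>\<^bsub>FreeGroup n\<^esub> \<otimes>\<^bsub>FreeGroup n\<^esub> x = x"
    by (simp add: carrier_FreeGroup red_reduced mult_FreeGroup one_FreeGroup)
next
  fix x assume x: "x \<in> carrier (FreeGroup n)"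
  then have "winv x \<in> carrier (FreeGroup n)"
    by (auto simp: carrier_FreeGroup reduced_winv set_winv)
  then show "\<exists>y\<in>carrier (FreeGroup n). y \<otimes>\<^bsub>FreeGroup n\<^esub> x = \<one>\<^bsub>FreeGroup n\<^esub>"
    by (force simp: mult_FreeGroup one_FreeGroup)
qed

lemma winv_carrier: "w \<in> carrier (FreeGroup n) \<Longrightarrow> winv w \<in> carrier (FreeGroup n)"
  by (auto simp: carrier_FreeGroup reduced_winv set_winv)

lemma inv_FreeGroup: "w \<in> carrier (FreeGroup n) \<Longrightarrow> inv\<^bsub>FreeGroup n\<^esub> w = winv w"
  by (rule group.inv_equality[OF group_FreeGroup]) (auto simp: winv_carrier mult_FreeGroup one_FreeGroup)


definition eval_letter :: "('g,'m) monoid_scheme \<Rightarrow> (nat \<Rightarrow> 'g) \<Rightarrow> letter \<Rightarrow> 'g" where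
  "eval_letter G f l = (if fst l then inv\<^bsub>G\<^esub> (f (snd l)) else f (snd l))"

definition eval_word :: "('g,'m) monoid_scheme \<Rightarrow> (nat \<Rightarrow> 'g) \<Rightarrow> letter list \<Rightarrow> 'g" where
  "eval_word G f w = foldr (\<lambda>l acc. eval_letter G f l \<otimes>\<^bsub>G\<^esub> acc) w \<one>\<^bsub>G\<^esub>"

lemma eval_word_Nil[simp]: "eval_word G f [] = \<one>\<^bsub>G\<^esub>" by (simp add: eval_word_def)
lemma eval_word_Cons[simp]: "eval_word G f (l # w) = eval_letter G f l \<otimes>\<^bsub>G\<^esub> eval_word G f w"
  by (simp add: eval_word_def)

lemma eval_word_cong: "\<forall>l\<in>set w. f (snd l) = g (snd l) \<Longrightarrow> eval_word G f w = eval_word G g w"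
  by (induction w) (auto simp: eval_letter_def)

context group
begin

lemma eval_letter_closed: "f (snd l) \<in> carrier G \<Longrightarrow> eval_letter G f l \<in> carrier G"
  by (simp add: eval_letter_def)

lemma eval_word_closed:
  "\<forall>l\<in>set w. f (snd l) \<in> carrier G \<Longrightarrow> eval_word G f w \<in> carrier G"
  by (induction w) (auto simp: eval_letter_closed)

lemma eval_word_append:
  assumes "\<forall>l\<in>set u. f (snd l) \<in> carrier G" "\<forall>l\<in>set v. f (snd l) \<in> carrier G"
  shows "eval_word G f (u @ v) = eval_word G f u \<otimes> eval_word G f v"
  using assms by (induction u) (auto simp: eval_letter_closed eval_word_closed m_assoc)

lemma eval_letter_inv_letter:
  "f (snd l) \<in> carrier G \<Longrightarrow> eval_letter G f (inv_letter l) = inv (eval_letter G f l)"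
  by (auto simp: eval_letter_def inv_letter_def)

lemma eval_word_cancel_cons:
  assumes "f (snd l) \<in> carrier G" "\<forall>x\<in>set s. f (snd x) \<in> carrier G"
  shows "eval_word G f (cancel_cons l s) = eval_letter G f l \<otimes> eval_word G f s"
proof (cases s)
  case Nil then show ?thesis using assms by (simp add: cancel_cons_def eval_letter_closed)
next
  case (Cons m ms)
  show ?thesis
  proof (cases "inv_pair l m")
    case True
    then have m: "m = inv_letter l" by (simp add: inv_pair_iff)
    have "eval_letter G f l \<otimes> eval_word G f s = eval_letter G f l \<otimes> (inv (eval_letter G f l) \<otimes> eval_word G f ms)"
      using Cons m assms by (simp add: eval_letter_inv_letter)
    also have "\<dots> = eval_word G f ms" using assms Cons
      by (simp add: m_assoc[symmetric] eval_letter_closed eval_word_closed)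
    finally show ?thesis using Cons True by (simp add: cancel_cons_def)
  next
    case False then show ?thesis using Cons by (simp add: cancel_cons_def)
  qed
qed

lemma eval_word_red:
  "\<forall>x\<in>set w. f (snd x) \<in> carrier G \<Longrightarrow> eval_word G f (red w) = eval_word G f w"
proof (induction w)
  case Nil then show ?case by simp
next
  case (Cons l w)
  have "\<forall>x\<in>set (red w). f (snd x) \<in> carrier G" using Cons.prems set_red by auto
  then show ?case using Cons by (simp add: eval_word_cancel_cons)
qed

end

lemma eval_word_hom:
  assumes G: "group G" and f: "\<forall>a\<in>{1..n}. f a \<in> carrier G"
  shows "eval_word G f \<in> hom (FreeGroup n) G"
proof (rule homI)
  fix x assume "x \<in> carrier (FreeGroup n)"
  then show "eval_word G f x \<in> carrier G"
    using f by (auto intro!: group.eval_word_closed[OF G] simp: carrier_FreeGroup)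
next
  fix x y assume x: "x \<in> carrier (FreeGroup n)" and y: "y \<in> carrier (FreeGroup n)"
  have f_letters: "\<forall>l\<in>set x. f (snd l) \<in> carrier G" "\<forall>l\<in>set y. f (snd l) \<in> carrier G"
    using x y f by (auto simp: carrier_FreeGroup)
  then have "\<forall>l\<in>set (x @ y). f (snd l) \<in> carrier G" by auto
  then show "eval_word G f (x \<otimes>\<^bsub>FreeGroup n\<^esub> y) = eval_word G f x \<otimes>\<^bsub>G\<^esub> eval_word G f y"
    using f_letters
    by (simp add: group.eval_word_red[OF G] group.eval_word_append[OF G] mult_FreeGroup)
qed

lemma gen_carrier: "a \<in> {1..n} \<Longrightarrow> gen a \<in> carrier (FreeGroup n)"
  by (simp add: carrier_FreeGroup gen_def)

lemma carrier_Cons: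
  "l # w \<in> carrier (FreeGroup n) \<Longrightarrow> w \<in> carrier (FreeGroup n) \<and> [l] \<in> carrier (FreeGroup n)"
  by (auto simp: carrier_FreeGroup reduced_Cons)

lemma Cons_mult:
  "l # w \<in> carrier (FreeGroup n) \<Longrightarrow> l # w = [l] \<otimes>\<^bsub>FreeGroup n\<^esub> w"
  using red_reduced[of "l # w"] by (simp add: carrier_FreeGroup mult_FreeGroup)

lemma single_eval_letter: "[l] \<in> carrier (FreeGroup n) \<Longrightarrow> [l] = eval_letter (FreeGroup n) gen l"
  using inv_FreeGroup[of "gen (snd l)" n]
  by (cases l) (auto simp: eval_letter_def gen_def carrier_FreeGroup inv_letter_def)

lemma eval_word_gen: "w \<in> carrier (FreeGroup n) \<Longrightarrow> eval_word (FreeGroup n) gen w = w"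
proof (induction w)
  case Nil then show ?case by (simp add: one_FreeGroup)
next
  case (Cons l w)
  have w: "w \<in> carrier (FreeGroup n)" and l: "[l] \<in> carrier (FreeGroup n)"
    using carrier_Cons[OF Cons.prems] by auto
  have "eval_word (FreeGroup n) gen (l # w) = eval_letter (FreeGroup n) gen l \<otimes>\<^bsub>FreeGroup n\<^esub> eval_word (FreeGroup n) gen w"
    by (rule eval_word_Cons)
  also have "\<dots> = [l] \<otimes>\<^bsub>FreeGroup n\<^esub> w"
    by (simp only: Cons.IH[OF w] single_eval_letter[OF l, symmetric])
  also have "\<dots> = l # w" by (rule Cons_mult[symmetric, OF Cons.prems])
  finally show ?case .
qed

lemma hom_eval_word_comm:
  assumes G: "group G" and H: "group H" and k: "k \<in> hom G H"
    and f: "\<forall>l\<in>set w. f (snd l) \<in> carrier G"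
  shows "k (eval_word G f w) = eval_word H (\<lambda>a. k (f a)) w"
  using f
proof (induction w)
  case Nil
  interpret gh: group_hom G H k by (simp add: group_hom_def group_hom_axioms_def G H k)
  show ?case by simp
next
  case (Cons l w)
  interpret gh: group_hom G H k by (simp add: group_hom_def group_hom_axioms_def G H k)
  have "k (eval_word G f (l # w)) = k (eval_letter G f l) \<otimes>\<^bsub>H\<^esub> k (eval_word G f w)"
    using Cons.prems by (simp add: group.eval_letter_closed[OF G] group.eval_word_closed[OF G])
  moreover have "k (eval_letter G f l) = eval_letter H (\<lambda>a. k (f a)) l"
    using Cons.prems by (simp add: eval_letter_def gh.hom_inv)
  ultimately show ?case using Cons by simp
qed

lemma hom_eval_word_eq:
  assumes G: "group G" and h: "h \<in> hom (FreeGroup n) G" and w: "w \<in> carrier (FreeGroup n)"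
  shows "h w = eval_word G (\<lambda>a. h (gen a)) w"
proof -
  have "\<forall>l\<in>set w. gen (snd l) \<in> carrier (FreeGroup n)"
    using w by (auto simp: carrier_FreeGroup gen_def)
  then have "h (eval_word (FreeGroup n) gen w) = eval_word G (\<lambda>a. h (gen a)) w"
    by (rule hom_eval_word_comm[OF group_FreeGroup G h])
  then show ?thesis using eval_word_gen[OF w] by simp
qed

lemma hom_FreeGroup_eq_on_gens:
  assumes G: "group G" and h1: "h1 \<in> hom (FreeGroup n) G" and h2: "h2 \<in> hom (FreeGroup n) G"
    and eq: "\<forall>a\<in>{1..n}. h1 (gen a) = h2 (gen a)" and w: "w \<in> carrier (FreeGroup n)"
  shows "h1 w = h2 w"
proof -
  have "eval_word G (\<lambda>a. h1 (gen a)) w = eval_word G (\<lambda>a. h2 (gen a)) w"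
    using w eq by (intro eval_word_cong) (auto simp: carrier_FreeGroup)
  then show ?thesis using hom_eval_word_eq[OF G h1 w] hom_eval_word_eq[OF G h2 w] by simp
qed

lemma carrier_FreeGroup_generate: "carrier (FreeGroup n) = generate (FreeGroup n) (gen ` {1..n})"
proof
  show "generate (FreeGroup n) (gen ` {1..n}) \<subseteq> carrier (FreeGroup n)"
    by (rule group.generate_incl[OF group_FreeGroup]) (auto simp: gen_carrier)
next
  show "carrier (FreeGroup n) \<subseteq> generate (FreeGroup n) (gen ` {1..n})"
  proof
    fix w assume w: "w \<in> carrier (FreeGroup n)"
    have "\<forall>l\<in>set w. snd l \<in> {1..n}" using w by (auto simp: carrier_FreeGroup)
    then have "eval_word (FreeGroup n) gen w \<in> generate (FreeGroup n) (gen ` {1..n})"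
    proof (induction w)
      case Nil show ?case using generate.one[of "FreeGroup n"] by simp
    next
      case (Cons l w)
      then have "eval_letter (FreeGroup n) gen l \<in> generate (FreeGroup n) (gen ` {1..n})"
        by (auto simp: eval_letter_def intro: generate.incl generate.inv)
      then show ?case using Cons by (auto intro: generate.eng)
    qed
    then show "w \<in> generate (FreeGroup n) (gen ` {1..n})" using eval_word_gen[OF w] by simp
  qed
qed

section \<open>Automorphisms\<close>

context group
begin

lemma carrier_AutoGroup: "carrier (AutoGroup G) = auto G"
  by (simp add: AutoGroup_def)

lemma auto_group_hom: "f \<in> auto G \<Longrightarrow> group_hom G G f"
  by (simp add: group_hom_def group_hom_axioms_def is_group auto_def)

lemma auto_closed: "f \<in> auto G \<Longrightarrow> x \<in> carrier G \<Longrightarrow> f x \<in> carrier G"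
  by (auto simp: auto_def intro: hom_in_carrier)

lemma auto_extensional: "f \<in> auto G \<Longrightarrow> f \<in> extensional (carrier G)"
  by (simp add: auto_def Bij_def)

lemma AutoGroup_mult:
  "f \<in> auto G \<Longrightarrow> g \<in> auto G \<Longrightarrow> f \<otimes>\<^bsub>AutoGroup G\<^esub> g = compose (carrier G) f g"
  by (simp add: AutoGroup_def BijGroup_def auto_def)

lemma AutoGroup_mult_apply:
  "f \<in> auto G \<Longrightarrow> g \<in> auto G \<Longrightarrow> x \<in> carrier G \<Longrightarrow> (f \<otimes>\<^bsub>AutoGroup G\<^esub> g) x = f (g x)"
  by (simp add: AutoGroup_mult compose_def)

lemma AutoGroup_one: "\<one>\<^bsub>AutoGroup G\<^esub> = (\<lambda>x\<in>carrier G. x)"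
  by (simp add: AutoGroup_def BijGroup_def)

lemma auto_inv_closed: "f \<in> auto G \<Longrightarrow> inv\<^bsub>AutoGroup G\<^esub> f \<in> auto G"
  using group.inv_closed[OF AutoGroup] by (simp add: carrier_AutoGroup)

lemma AutoGroup_inv_apply:
  assumes f: "f \<in> auto G" and x: "x \<in> carrier G"
  shows "f ((inv\<^bsub>AutoGroup G\<^esub> f) x) = x"
proof -
  have "(f \<otimes>\<^bsub>AutoGroup G\<^esub> inv\<^bsub>AutoGroup G\<^esub> f) x = \<one>\<^bsub>AutoGroup G\<^esub> x"
    using group.r_inv[OF AutoGroup] f by (simp add: carrier_AutoGroup)
  then show ?thesis using f x auto_inv_closed by (simp add: AutoGroup_mult_apply AutoGroup_one)
qed

lemma auto_eqI:
  "f \<in> auto G \<Longrightarrow> g \<in> auto G \<Longrightarrow> (\<And>x. x \<in> carrier G \<Longrightarrow> f x = g x) \<Longrightarrow> f = g"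
  by (rule extensionalityI[OF auto_extensional auto_extensional])

end

lemma auto_FreeGroup_eq_on_gens:
  assumes "f \<in> auto (FreeGroup n)" "g \<in> auto (FreeGroup n)"
    and "\<forall>a\<in>{1..n}. f (gen a) = g (gen a)"
  shows "f = g"
  using assms hom_FreeGroup_eq_on_gens[OF group_FreeGroup, of f n n g]
  by (intro group.auto_eqI[OF group_FreeGroup]) (auto simp: auto_def)

lemma auto_FreeGroup_pairI:
  assumes f: "f \<in> hom (FreeGroup n) (FreeGroup n)" and g: "g \<in> hom (FreeGroup n) (FreeGroup n)"
    and fe: "f \<in> extensional (carrier (FreeGroup n))" and ge: "g \<in> extensional (carrier (FreeGroup n))"
    and fg: "\<forall>a\<in>{1..n}. f (g (gen a)) = gen a" and gf: "\<forall>a\<in>{1..n}. g (f (gen a)) = gen a"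
  shows "f \<in> auto (FreeGroup n)" "g \<in> auto (FreeGroup n)" "inv\<^bsub>AutoGroup (FreeGroup n)\<^esub> f = g"
proof -
  let ?F = "FreeGroup n"
  interpret F: group ?F by (rule group_FreeGroup)
  have id_hom: "(\<lambda>x\<in>carrier ?F. x) \<in> hom ?F ?F" by (rule homI) auto
  have inverse: "p (q x) = x"
    if p: "p \<in> hom ?F ?F" and q: "q \<in> hom ?F ?F" and pq: "\<forall>a\<in>{1..n}. p (q (gen a)) = gen a"
      and x: "x \<in> carrier ?F" for p q x
  proof -
    have "compose (carrier ?F) p q x = (\<lambda>x\<in>carrier ?F. x) x"
      by (rule hom_FreeGroup_eq_on_gens[OF group_FreeGroup F.hom_compose[OF q p] id_hom _ x])
        (auto simp: compose_def pq gen_carrier)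
    then show ?thesis using x by (simp add: compose_def)
  qed
  have fc: "f \<in> carrier ?F \<rightarrow> carrier ?F" and gc: "g \<in> carrier ?F \<rightarrow> carrier ?F"
    using f g by (auto simp: hom_def)
  have "bij_betw f (carrier ?F) (carrier ?F)"
    by (rule bij_betw_byWitness[where f'=g]) (use inverse[OF f g fg] inverse[OF g f gf] fc gc in auto)
  moreover have "bij_betw g (carrier ?F) (carrier ?F)"
    by (rule bij_betw_byWitness[where f'=f]) (use inverse[OF f g fg] inverse[OF g f gf] fc gc in auto)
  ultimately show fa: "f \<in> auto ?F" and ga: "g \<in> auto ?F"
    using f g fe ge by (auto simp: auto_def Bij_def)
  have "g \<otimes>\<^bsub>AutoGroup ?F\<^esub> f = \<one>\<^bsub>AutoGroup ?F\<^esub>"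
    using fa ga inverse[OF g f gf] by (auto simp: F.AutoGroup_mult F.AutoGroup_one compose_def)
  then show "inv\<^bsub>AutoGroup ?F\<^esub> f = g"
    using group.inv_equality[OF F.AutoGroup] fa ga by (simp add: F.carrier_AutoGroup)
qed

lemma group_F3: "group F3" by (rule group_FreeGroup)
lemma group_AutF3: "group AutF3" by (rule group.AutoGroup[OF group_FreeGroup])

interpretation F3: group F3 by (rule group_F3)
interpretation Aut: group AutF3 by (rule group_AutF3)

lemma F3_inv_mult_cancel [simp]:
  "x \<in> carrier F3 \<Longrightarrow> y \<in> carrier F3 \<Longrightarrow> inv\<^bsub>F3\<^esub> x \<otimes>\<^bsub>F3\<^esub> (x \<otimes>\<^bsub>F3\<^esub> y) = y"
  "x \<in> carrier F3 \<Longrightarrow> y \<in> carrier F3 \<Longrightarrow> x \<otimes>\<^bsub>F3\<^esub> (inv\<^bsub>F3\<^esub> x \<otimes>\<^bsub>F3\<^esub> y) = y"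
  by (simp_all add: F3.m_assoc[symmetric])

section \<open>Substitutions\<close>

lemma subst_eval_word:
  assumes "\<forall>l\<in>set w. f (snd l) \<in> carrier (FreeGroup n)"
  shows "subst f w = eval_word (FreeGroup n) f w"
  using assms
proof (induction w)
  case Nil then show ?case by (simp add: subst_def one_FreeGroup)
next
  case (Cons l w)
  obtain b a where l: "l = (b, a)" by (cases l)
  have fa: "f a \<in> carrier (FreeGroup n)" using Cons.prems l by auto
  have "subst f (l # w) = red ((if b then winv (f a) else f a)
      @ red (concat (map (\<lambda>(b, a). if b then winv (f a) else f a) w)))"
    using l by (simp add: subst_def del: red_Cons)
  also have "\<dots> = red (eval_letter (FreeGroup n) f l @ eval_word (FreeGroup n) f w)"
    using Cons fa l by (simp add: subst_def eval_letter_def inv_FreeGroup del: red_Cons)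
  also have "\<dots> = eval_word (FreeGroup n) f (l # w)"
    by (simp add: mult_FreeGroup del: red_Cons)
  finally show ?case .
qed

lemma subst_hom_restrict:
  assumes "\<forall>a\<in>{1..n}. f a \<in> carrier (FreeGroup n)"
  shows "restrict (subst f) (carrier (FreeGroup n)) \<in> hom (FreeGroup n) (FreeGroup n)"
proof (rule group.hom_restrict[OF group_FreeGroup eval_word_hom[OF group_FreeGroup assms]])
  fix w assume w: "w \<in> carrier (FreeGroup n)"
  have "\<forall>l\<in>set w. f (snd l) \<in> carrier (FreeGroup n)"
  proof
    fix l assume "l \<in> set w"
    then have "snd l \<in> {1..n}" using w by (auto simp: carrier_FreeGroup)
    then show "f (snd l) \<in> carrier (FreeGroup n)" using assms by blast
  qed
  with w show "eval_word (FreeGroup n) f w = restrict (subst f) (carrier (FreeGroup n)) w"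
    by (simp add: subst_eval_word)
qed

lemma subst_gen: "reduced (f a) \<Longrightarrow> subst f (gen a) = f a"
  by (simp add: subst_def gen_def red_reduced del: red_Cons)

definition xi_subst :: "nat \<Rightarrow> nat \<Rightarrow> nat \<Rightarrow> letter list" where
  "xi_subst i j = (\<lambda>l. if l = i then [(True,j),(False,i),(False,j)] else [(False,l)])"
definition xi_inv_subst :: "nat \<Rightarrow> nat \<Rightarrow> nat \<Rightarrow> letter list" where
  "xi_inv_subst i j = (\<lambda>l. if l = i then [(False,j),(False,i),(True,j)] else [(False,l)])"
definition xi_inv :: "nat \<Rightarrow> nat \<Rightarrow> letter list \<Rightarrow> letter list" where
  "xi_inv i j = restrict (subst (xi_inv_subst i j)) (carrier F3)"

lemma xi_eq_restrict_subst: "xi i j = restrict (subst (xi_subst i j)) (carrier F3)"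
  by (simp add: xi_def xi_subst_def)

lemma xi_subst_carrier:
  "i \<in> {1..3} \<Longrightarrow> j \<in> {1..3} \<Longrightarrow> i \<noteq> j \<Longrightarrow> a \<in> {1..3} \<Longrightarrow> xi_subst i j a \<in> carrier F3"
  by (auto simp: xi_subst_def carrier_FreeGroup inv_pair_def)
lemma xi_inv_subst_carrier:
  "i \<in> {1..3} \<Longrightarrow> j \<in> {1..3} \<Longrightarrow> i \<noteq> j \<Longrightarrow> a \<in> {1..3} \<Longrightarrow> xi_inv_subst i j a \<in> carrier F3"
  by (auto simp: xi_inv_subst_def carrier_FreeGroup inv_pair_def)

lemma xi_gen:
  "i \<in> {1..3} \<Longrightarrow> j \<in> {1..3} \<Longrightarrow> i \<noteq> j \<Longrightarrow> a \<in> {1..3} \<Longrightarrow> xi i j (gen a) = xi_subst i j a"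
  using xi_subst_carrier[of i j a] gen_carrier[of a 3]
  by (simp add: xi_eq_restrict_subst subst_gen carrier_FreeGroup del: red_Cons)
lemma xi_inv_gen:
  "i \<in> {1..3} \<Longrightarrow> j \<in> {1..3} \<Longrightarrow> i \<noteq> j \<Longrightarrow> a \<in> {1..3} \<Longrightarrow> xi_inv i j (gen a) = xi_inv_subst i j a"
  using xi_inv_subst_carrier[of i j a] gen_carrier[of a 3]
  by (simp add: xi_inv_def subst_gen carrier_FreeGroup del: red_Cons)

lemma xi_gen_other:
  "i \<in> {1..3} \<Longrightarrow> j \<in> {1..3} \<Longrightarrow> i \<noteq> j \<Longrightarrow> a \<in> {1..3} \<Longrightarrow> a \<noteq> i \<Longrightarrow> xi i j (gen a) = gen a"
  by (subst xi_gen) (auto simp: xi_subst_def gen_def)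
lemma xi_inv_gen_other:
  "i \<in> {1..3} \<Longrightarrow> j \<in> {1..3} \<Longrightarrow> i \<noteq> j \<Longrightarrow> a \<in> {1..3} \<Longrightarrow> a \<noteq> i \<Longrightarrow> xi_inv i j (gen a) = gen a"
  by (subst xi_inv_gen) (auto simp: xi_inv_subst_def gen_def)

lemma xi_hom:
  "i \<in> {1..3} \<Longrightarrow> j \<in> {1..3} \<Longrightarrow> i \<noteq> j \<Longrightarrow> xi i j \<in> hom F3 F3"
  unfolding xi_eq_restrict_subst by (rule subst_hom_restrict) (simp add: xi_subst_carrier)
lemma xi_inv_hom:
  "i \<in> {1..3} \<Longrightarrow> j \<in> {1..3} \<Longrightarrow> i \<noteq> j \<Longrightarrow> xi_inv i j \<in> hom F3 F3"
  unfolding xi_inv_def by (rule subst_hom_restrict) (simp add: xi_inv_subst_carrier)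

lemma xi_apply: "w \<in> carrier F3 \<Longrightarrow> xi i j w = subst (xi_subst i j) w"
  by (simp add: xi_eq_restrict_subst)
lemma xi_inv_apply: "w \<in> carrier F3 \<Longrightarrow> xi_inv i j w = subst (xi_inv_subst i j) w"
  by (simp add: xi_inv_def)

lemma xi_auto_inverse:
  assumes "i \<in> {1..3}" "j \<in> {1..3}" "i \<noteq> j"
  shows "xi i j \<in> auto F3" "xi_inv i j \<in> auto F3" "inv\<^bsub>AutF3\<^esub> (xi i j) = xi_inv i j"
proof -
  have c1: "[(False,j),(False,i),(True,j)] \<in> carrier F3" "[(True,j),(False,i),(False,j)] \<in> carrier F3"
    using assms by (auto simp: carrier_FreeGroup inv_pair_def)
  have fg: "\<forall>a\<in>{1..3}. xi i j (xi_inv i j (gen a)) = gen a"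
  proof
    fix a :: nat assume a: "a \<in> {1..3}"
    show "xi i j (xi_inv i j (gen a)) = gen a"
    proof (cases "a = i")
      case True
      have "xi_inv i j (gen a) = [(False,j),(False,i),(True,j)]"
        using True assms a by (simp add: xi_inv_gen xi_inv_subst_def)
      moreover have "xi i j [(False,j),(False,i),(True,j)] = gen a"
        using True assms a c1
        by (simp add: xi_apply subst_def xi_subst_def inv_pair_def cancel_cons_def gen_def)
      ultimately show ?thesis by simp
    next
      case False
      then show ?thesis using assms a by (simp add: xi_inv_gen_other xi_gen_other)
    qed
  qed
  have gf: "\<forall>a\<in>{1..3}. xi_inv i j (xi i j (gen a)) = gen a"
  proof
    fix a :: nat assume a: "a \<in> {1..3}"
    show "xi_inv i j (xi i j (gen a)) = gen a"
    proof (cases "a = i")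
      case True
      have "xi i j (gen a) = [(True,j),(False,i),(False,j)]"
        using True assms a by (simp add: xi_gen xi_subst_def)
      moreover have "xi_inv i j [(True,j),(False,i),(False,j)] = gen a"
        using True assms a c1
        by (simp add: xi_inv_apply subst_def xi_inv_subst_def inv_pair_def cancel_cons_def gen_def)
      ultimately show ?thesis by simp
    next
      case False
      then show ?thesis using assms a by (simp add: xi_inv_gen_other xi_gen_other)
    qed
  qed
  have e: "xi i j \<in> extensional (carrier F3)" "xi_inv i j \<in> extensional (carrier F3)"
    by (simp_all add: xi_eq_restrict_subst xi_inv_def)
  note r = auto_FreeGroup_pairI[OF xi_hom[OF assms] xi_inv_hom[OF assms] e fg gf]
  show "xi i j \<in> auto F3" "xi_inv i j \<in> auto F3" "inv\<^bsub>AutF3\<^esub> (xi i j) = xi_inv i j"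
    using r by auto
qed

section \<open>Powers and centralisers of generators\<close>

lemma red_snoc:
  assumes "reduced g"
  shows "red (g @ [x]) = (if g \<noteq> [] \<and> inv_pair (last g) x then butlast g else g @ [x])"
proof (cases "g \<noteq> [] \<and> inv_pair (last g) x")
  case True
  then obtain g' where g: "g = g' @ [inv_letter x]"
    by (metis append_butlast_last_id inv_pair_iff inv_pair_sym inv_letter_inv_letter)
  have rg': "reduced g'" using assms g by (simp add: reduced_append)
  have "red (g @ [x]) = red (g' @ red [inv_letter x, x])"
    using g by (metis append.assoc append_Cons append_Nil red_append_right)
  also have "red [inv_letter x, x] = []" by (simp add: cancel_cons_def inv_pair_iff)
  finally show ?thesis using True g rg' by (simp add: red_reduced del: red_Cons)
next
  case False
  then have "reduced (g @ [x])" using assms by (auto simp: reduced_append)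
  then have "red (g @ [x]) = g @ [x]" by (rule red_reduced)
  then show ?thesis using False by auto
qed

lemma snoc_eq_Cons_replicate: "xs @ [y] = x # xs \<Longrightarrow> xs = replicate (length xs) x"
proof (induction xs arbitrary: x)
  case (Cons a xs)
  then have "a = x" "xs @ [y] = a # xs" by auto
  then show ?case using Cons.IH by simp
qed simp

lemma butlast_eq_tl_replicate: "butlast (a # r) = r \<Longrightarrow> r = replicate (length r) a"
proof (induction r arbitrary: a)
  case (Cons b r)
  then have "a = b" "butlast (b # r) = r" by auto
  then show ?case using Cons.IH by (metis length_Cons replicate_Suc)
qed simp

lemma reduced_replicate: "reduced (replicate n l)"
  by (induction n) (auto simp: reduced_Cons inv_pair_def)

lemma reduced_one_letter_replicate:
  "reduced y \<Longrightarrow> \<forall>l\<in>set y. snd l = a \<Longrightarrow> y = replicate (length y) (hd y)"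
proof (induction y)
  case (Cons l y)
  show ?case
  proof (cases "y = []")
    case False
    then obtain m ys where y: "y = m # ys" by (cases y) auto
    have "snd l = snd m" "\<not> inv_pair l m" using Cons.prems y by (auto simp: reduced_Cons)
    then have "l = m" by (cases l; cases m) (auto simp: inv_pair_def)
    then show ?thesis using Cons y by (simp add: reduced_Cons)
  qed simp
qed simp

lemma single_nat_pow:
  assumes "[l] \<in> carrier (FreeGroup n)"
  shows "[l] [^]\<^bsub>FreeGroup n\<^esub> (k::nat) = replicate k l"
proof (induction k)
  case (Suc k)
  have "[l] [^]\<^bsub>FreeGroup n\<^esub> Suc k = red (replicate k l @ [l])"
    using Suc by (simp add: mult_FreeGroup del: red_Cons)
  also have "replicate k l @ [l] = replicate (Suc k) l" by (simp add: replicate_append_same)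
  finally show ?case by (simp only: red_reduced[OF reduced_replicate])
qed (simp add: one_FreeGroup)

lemma inv_gen: "a \<in> {1..n} \<Longrightarrow> inv\<^bsub>FreeGroup n\<^esub> (gen a) = [(True, a)]"
  using inv_FreeGroup[OF gen_carrier[of a n]] by (simp add: gen_def inv_letter_def)

lemma gen_int_pow:
  assumes a: "a \<in> {1..n}"
  shows "gen a [^]\<^bsub>FreeGroup n\<^esub> (m::int) = replicate (nat \<bar>m\<bar>) (m < 0, a)"
proof -
  interpret F: group "FreeGroup n" by (rule group_FreeGroup)
  have x: "gen a \<in> carrier (FreeGroup n)" using a by (rule gen_carrier)
  have c: "[(b, a)] \<in> carrier (FreeGroup n)" for b using a by (simp add: carrier_FreeGroup)
  show ?thesis
  proof (cases "m < 0")
    case True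
    have "gen a [^]\<^bsub>FreeGroup n\<^esub> m = inv\<^bsub>FreeGroup n\<^esub> (gen a [^]\<^bsub>FreeGroup n\<^esub> nat (- m))"
      using True unfolding int_pow_def2 by simp
    also have "\<dots> = (inv\<^bsub>FreeGroup n\<^esub> (gen a)) [^]\<^bsub>FreeGroup n\<^esub> nat (- m)"
      using x by (rule F.nat_pow_inv[symmetric])
    also have "\<dots> = replicate (nat (- m)) (True, a)"
      unfolding inv_gen[OF a] by (rule single_nat_pow[OF c])
    finally show ?thesis using True by simp
  next
    case False
    then have "gen a [^]\<^bsub>FreeGroup n\<^esub> m = [(False, a)] [^]\<^bsub>FreeGroup n\<^esub> nat m"
      unfolding int_pow_def2 gen_def by simp
    then show ?thesis using False single_nat_pow[OF c] by simp
  qed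
qed

lemma replicate_eq_gen_int_pow:
  assumes "a \<in> {1..n}"
  shows "\<exists>m::int. replicate k (b, a) = gen a [^]\<^bsub>FreeGroup n\<^esub> m"
proof (cases "b \<and> k > 0")
  case True
  then show ?thesis using gen_int_pow[OF assms, of "- int k"] by (intro exI[of _ "- int k"]) simp
next
  case False
  then have "replicate k (b, a) = replicate k (False, a)" by auto
  then show ?thesis using gen_int_pow[OF assms, of "int k"] by (intro exI[of _ "int k"]) simp
qed

lemma mult_gen_right:
  assumes "reduced g"
  shows "g \<otimes>\<^bsub>FreeGroup n\<^esub> gen a
    = (if g \<noteq> [] \<and> last g = (True, a) then butlast g else g @ [(False, a)])"
proof -
  have "inv_pair (last g) (False, a) \<longleftrightarrow> last g = (True, a)"
    by (cases "last g") (auto simp: inv_pair_def)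
  then show ?thesis using red_snoc[OF assms, of "(False, a)"]
    by (simp add: mult_FreeGroup gen_def del: red_Cons)
qed

lemma mult_gen_left:
  "reduced g \<Longrightarrow> gen a \<otimes>\<^bsub>FreeGroup n\<^esub> g = cancel_cons (False, a) g"
  using red_reduced by (simp add: mult_FreeGroup gen_def)

text \<open>Comparing g x_a with x_a g, either both cancel a letter and g is a power of x_a^-1,
  or neither does and g is a power of x_a; the mixed cases differ in length by two.\<close>

lemma centraliser_gen:
  assumes g: "g \<in> carrier (FreeGroup n)" and a: "a \<in> {1..n}"
    and c: "g \<otimes>\<^bsub>FreeGroup n\<^esub> gen a = gen a \<otimes>\<^bsub>FreeGroup n\<^esub> g"
  shows "\<exists>m::int. g = gen a [^]\<^bsub>FreeGroup n\<^esub> m"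
proof -
  have rg: "reduced g" using g by (simp add: carrier_FreeGroup)
  note c = c[unfolded mult_gen_right[OF rg] mult_gen_left[OF rg]]
  have "\<exists>b. g = replicate (length g) (b, a)"
  proof (cases g)
    case (Cons h r)
    have "cancel_cons (False, a) (h # r) = (if h = (True, a) then r else (False, a) # h # r)"
      by (simp add: cancel_cons_def inv_pair_iff inv_letter_def)
    then have eq: "(if last g = (True, a) then butlast g else g @ [(False, a)])
        = (if h = (True, a) then r else (False, a) # g)"
      using c Cons by simp
    show ?thesis
    proof (cases "last g = (True, a)"; cases "h = (True, a)")
      assume "last g = (True, a)" "h = (True, a)"
      then have "butlast (h # r) = r" using eq Cons by simp
      then have "r = replicate (length r) h" by (rule butlast_eq_tl_replicate)
      then have "g = replicate (length g) (True, a)"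
        using Cons \<open>h = (True, a)\<close> by (metis length_Cons replicate_Suc)
      then show ?thesis ..
    next
      assume "last g = (True, a)" "h \<noteq> (True, a)"
      then have "length (butlast g) = length ((False, a) # g)" using eq by simp
      then show ?thesis by simp
    next
      assume "last g \<noteq> (True, a)" "h = (True, a)"
      then have "length (g @ [(False, a)]) = length r" using eq by simp
      then show ?thesis using Cons by simp
    next
      assume "last g \<noteq> (True, a)" "h \<noteq> (True, a)"
      then have "g @ [(False, a)] = (False, a) # g" using eq by (simp only: if_not_P if_False)
      then have "g = replicate (length g) (False, a)" by (rule snoc_eq_Cons_replicate)
      then show ?thesis ..
    qed
  qed simp
  then obtain b where "g = replicate (length g) (b, a)" ..
  then show ?thesis using replicate_eq_gen_int_pow[OF a, of "length g" b] by simp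
qed

section \<open>The exponent of the leading x_1-syllable\<close>

definition letter_sign :: "letter \<Rightarrow> int" where "letter_sign l = (if fst l then -1 else 1)"

definition x1_head_exp :: "letter list \<Rightarrow> int" where
  "x1_head_exp y = sum_list (map letter_sign (takeWhile (\<lambda>l. snd l = 1) y))"

lemma x1_head_exp_Cons1: "snd l = 1 \<Longrightarrow> x1_head_exp (l # y) = letter_sign l + x1_head_exp y"
  by (simp add: x1_head_exp_def)

lemma x1_head_exp_Cons_other: "snd l \<noteq> 1 \<Longrightarrow> x1_head_exp (l # y) = 0"
  by (simp add: x1_head_exp_def)

lemma x1_head_exp_cancel_cons:
  assumes l: "snd l = 1"
  shows "x1_head_exp (cancel_cons l y) = letter_sign l + x1_head_exp y"
proof (cases y)
  case (Cons m ms)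
  show ?thesis
  proof (cases "inv_pair l m")
    case True
    then have "m = inv_letter l" by (simp add: inv_pair_iff)
    then have "x1_head_exp y = - letter_sign l + x1_head_exp ms"
      using Cons l by (simp add: x1_head_exp_Cons1 letter_sign_def inv_letter_def)
    then show ?thesis using Cons True by (simp add: cancel_cons_def)
  next
    case False
    then show ?thesis using Cons l by (simp add: cancel_cons_def x1_head_exp_Cons1)
  qed
qed (simp add: cancel_cons_def x1_head_exp_Cons1 l)

lemma x1_head_exp_red_replicate_append:
  "snd l = 1 \<Longrightarrow> reduced y \<Longrightarrow>
     x1_head_exp (red (replicate k l @ y)) = int k * letter_sign l + x1_head_exp y"
  by (induction k) (simp_all add: red_reduced x1_head_exp_cancel_cons algebra_simps)

lemma takeWhile_snoc_not: "\<not> P x \<Longrightarrow> takeWhile P (xs @ [x]) = takeWhile P xs"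
  by (induction xs) auto

lemma x1_head_exp_red_snoc:
  assumes r: "reduced y" and l: "snd l \<noteq> 1"
  shows "x1_head_exp (red (y @ [l])) = x1_head_exp y"
proof (cases "y \<noteq> [] \<and> inv_pair (last y) l")
  case True
  then have "snd (last y) \<noteq> 1" using l by (simp add: inv_pair_def)
  then have "takeWhile (\<lambda>l. snd l = 1) (butlast y @ [last y]) = takeWhile (\<lambda>l. snd l = 1) (butlast y)"
    by (rule takeWhile_snoc_not)
  then show ?thesis using True red_snoc[OF r] unfolding x1_head_exp_def by simp
next
  case False
  have "red (y @ [l]) = (if y \<noteq> [] \<and> inv_pair (last y) l then butlast y else y @ [l])"
    by (rule red_snoc[OF r])
  also have "\<dots> = y @ [l]" using False by (rule if_not_P)
  finally show ?thesis using l by (simp add: x1_head_exp_def takeWhile_snoc_not)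
qed

lemma x1_head_exp_red_append_replicate:
  "snd l \<noteq> 1 \<Longrightarrow> reduced y \<Longrightarrow> x1_head_exp (red (y @ replicate k l)) = x1_head_exp y"
proof (induction k)
  case (Suc k)
  have "y @ replicate (Suc k) l = (y @ replicate k l) @ [l]" by (simp add: replicate_append_same)
  then have "x1_head_exp (red (y @ replicate (Suc k) l))
      = x1_head_exp (red (red (y @ replicate k l) @ [l]))"
    by (metis red_append_left)
  also have "\<dots> = x1_head_exp (red (y @ replicate k l))"
    by (rule x1_head_exp_red_snoc[OF reduced_red Suc.prems(1)])
  finally show ?case using Suc by simp
qed (simp add: red_reduced)

lemma x1_head_exp_gen1_pow_mult:
  "y \<in> carrier F3 \<Longrightarrow> x1_head_exp (gen 1 [^]\<^bsub>F3\<^esub> (m::int) \<otimes>\<^bsub>F3\<^esub> y) = m + x1_head_exp y"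
  using x1_head_exp_red_replicate_append[of "(m < 0, 1)" y "nat \<bar>m\<bar>"]
  by (simp add: gen_int_pow mult_FreeGroup carrier_FreeGroup letter_sign_def del: red_Cons)

lemma x1_head_exp_mult_gen_pow:
  "y \<in> carrier F3 \<Longrightarrow> j \<in> {2, 3} \<Longrightarrow> x1_head_exp (y \<otimes>\<^bsub>F3\<^esub> gen j [^]\<^bsub>F3\<^esub> (m::int)) = x1_head_exp y"
  using x1_head_exp_red_append_replicate[of "(m < 0, j)" y "nat \<bar>m\<bar>"]
  by (auto simp: gen_int_pow mult_FreeGroup carrier_FreeGroup simp del: red_Cons)

lemma sum_letter_sign_one_letter:
  "reduced y \<Longrightarrow> \<forall>l\<in>set y. snd l = a \<Longrightarrow> sum_list (map letter_sign y) = letter_sign (hd y) * int (length y)"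
  by (subst reduced_one_letter_replicate, assumption+) (simp add: sum_list_replicate)

lemma x1_head_exp_eq_0_iff:
  assumes r: "reduced y"
  shows "x1_head_exp y = 0 \<longleftrightarrow> y = [] \<or> snd (hd y) \<noteq> 1"
proof -
  let ?t = "takeWhile (\<lambda>l. snd l = 1) y"
  have "reduced ?t" using r reduced_append[of ?t "dropWhile (\<lambda>l. snd l = 1) y"] by simp
  moreover have "\<forall>l\<in>set ?t. snd l = 1" by (meson set_takeWhileD)
  ultimately have "x1_head_exp y = letter_sign (hd ?t) * int (length ?t)"
    unfolding x1_head_exp_def by (rule sum_letter_sign_one_letter)
  moreover have "letter_sign (hd ?t) \<noteq> 0" by (simp add: letter_sign_def)
  ultimately have "x1_head_exp y = 0 \<longleftrightarrow> ?t = []" by simp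
  also have "\<dots> \<longleftrightarrow> y = [] \<or> snd (hd y) \<noteq> 1" by (cases y) auto
  finally show ?thesis .
qed

section \<open>Conjugates of powers of x_2 and x_3\<close>

lemma red_conj_replicate_same_letter:
  assumes "snd l = j" "n > 0"
  shows "red ([l] @ replicate n (b, j) @ [inv_letter l]) = replicate n (b, j)"
proof -
  obtain k where k: "n = Suc k" using assms(2) by (cases n) auto
  show ?thesis
  proof (cases "l = (b, j)")
    case True
    have e1: "replicate (Suc k) l = replicate k l @ [l]" by (simp add: replicate_append_same)
    have "red (replicate (Suc k) l @ [inv_letter l]) = butlast (replicate (Suc k) l)"
      using red_snoc[OF reduced_replicate, of "Suc k" l "inv_letter l"]
      by (simp add: inv_pair_iff del: red_Cons replicate_Suc)
    also have "\<dots> = replicate k l" by (subst e1) simp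
    finally have "red (replicate (Suc k) l @ [inv_letter l]) = replicate k l" .
    moreover have "cancel_cons l (replicate k l) = replicate (Suc k) l"
      by (cases k) (auto simp: cancel_cons_def inv_pair_def)
    ultimately show ?thesis using True k by simp
  next
    case False
    then have l: "l = inv_letter (b, j)" using assms(1) by (cases l) (auto simp: inv_letter_def)
    have "replicate n (b, j) @ [inv_letter l] = replicate (Suc n) (b, j)"
      using l by (simp add: replicate_append_same)
    then have "red (replicate n (b, j) @ [inv_letter l]) = replicate (Suc n) (b, j)"
      by (simp only: red_reduced[OF reduced_replicate])
    then show ?thesis using l by (simp add: cancel_cons_def inv_pair_iff)
  qed
qed

lemma red_conj_replicate:
  assumes n: "n > 0"
  shows "reduced r \<Longrightarrow> \<exists>r1. red (r @ replicate n (b, j) @ winv r) = r1 @ replicate n (b, j) @ winv r1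
              \<and> (r1 \<noteq> [] \<longrightarrow> r \<noteq> [] \<and> hd r1 = hd r)"
proof (induction r rule: rev_induct)
  case Nil
  then show ?case by (intro exI[of _ "[]"]) (simp add: red_reduced reduced_replicate del: red_Cons)
next
  case (snoc l r0)
  have r0: "reduced r0" using snoc.prems by (simp add: reduced_append)
  show ?case
  proof (cases "snd l = j")
    case True
    have "red ((r0 @ [l]) @ replicate n (b, j) @ winv (r0 @ [l]))
          = red (r0 @ ([l] @ replicate n (b, j) @ [inv_letter l]) @ winv r0)" by simp
    also have "\<dots> = red (r0 @ red ([l] @ replicate n (b, j) @ [inv_letter l]) @ winv r0)"
      by (simp only: red_append_mid)
    also have "\<dots> = red (r0 @ replicate n (b, j) @ winv r0)"
      using red_conj_replicate_same_letter[OF True n] by simp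
    finally show ?thesis using snoc.IH[OF r0] by (metis append_is_Nil_conv hd_append)
  next
    case False
    let ?r = "r0 @ [l]"
    have rr: "reduced (winv ?r)" using snoc.prems by (rule reduced_winv)
    have hw: "hd (winv ?r) = inv_letter l" by simp
    have lr: "last (replicate n (b, j)) = (b, j)" using n by simp
    have "\<not> inv_pair (b, j) (inv_letter l)" using False by (simp add: inv_pair_def)
    then have A: "reduced (replicate n (b, j) @ winv ?r)"
      using rr n reduced_append[of "replicate n (b, j)" "winv ?r"] hw lr
      by (simp add: reduced_replicate del: winv_append)
    have hA: "hd (replicate n (b, j) @ winv ?r) = (b, j)" using n by simp
    have "\<not> inv_pair l (b, j)" using False by (simp add: inv_pair_def)
    then have "reduced (?r @ (replicate n (b, j) @ winv ?r))"
      using reduced_append[of ?r "replicate n (b, j) @ winv ?r"] A hA snoc.prems n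
      by (simp del: winv_append append_assoc)
    then show ?thesis by (intro exI[of _ ?r]) (simp add: red_reduced del: red_Cons)
  qed
qed

lemma red_conj_replicate_ends:
  fixes b :: bool
  assumes r: "reduced r" and hr: "r = [] \<or> snd (hd r) \<noteq> 1" and j: "j \<noteq> 1" and n: "n > 0"
  defines "M \<equiv> red (r @ replicate n (b, j) @ winv r)"
  shows "M \<noteq> [] \<and> snd (hd M) \<noteq> 1 \<and> snd (last M) \<noteq> 1"
proof -
  obtain r1 where M: "M = r1 @ replicate n (b, j) @ winv r1" and h: "r1 \<noteq> [] \<longrightarrow> r \<noteq> [] \<and> hd r1 = hd r"
    using red_conj_replicate[OF n r] M_def by auto
  show ?thesis
  proof (cases "r1 = []")
    case True then show ?thesis using M n j by (cases n) auto
  next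
    case False
    have "last (winv r1) = inv_letter (hd r1)" using False by (cases r1) (auto simp: winv_alt)
    then show ?thesis using M False h hr n by auto
  qed
qed

lemma x1_head_exp_conj_mult_eq_0:
  assumes r: "r \<in> carrier F3" "x1_head_exp r = 0" and j: "j \<in> {2, 3}" and e: "e \<noteq> 0"
    and z: "z \<in> carrier F3" "x1_head_exp z \<noteq> 0"
  shows "x1_head_exp (r \<otimes>\<^bsub>F3\<^esub> gen j [^]\<^bsub>F3\<^esub> (e::int) \<otimes>\<^bsub>F3\<^esub> inv\<^bsub>F3\<^esub> r \<otimes>\<^bsub>F3\<^esub> z) = 0"
proof -
  have rr: "reduced r" and rz: "reduced z" using r z by (simp_all add: carrier_FreeGroup)
  have hr: "r = [] \<or> snd (hd r) \<noteq> 1" using x1_head_exp_eq_0_iff[OF rr] r by simp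
  have hz: "z \<noteq> [] \<and> snd (hd z) = 1" using x1_head_exp_eq_0_iff[OF rz] z by simp
  define M where "M = red (r @ replicate (nat \<bar>e\<bar>) (e < 0, j) @ winv r)"
  have MS: "M \<noteq> [] \<and> snd (hd M) \<noteq> 1 \<and> snd (last M) \<noteq> 1"
    unfolding M_def by (rule red_conj_replicate_ends[OF rr hr]) (use j e in auto)
  have "gen j [^]\<^bsub>F3\<^esub> e = replicate (nat \<bar>e\<bar>) (e < 0, j)"
    using j by (intro gen_int_pow) auto
  then have "r \<otimes>\<^bsub>F3\<^esub> gen j [^]\<^bsub>F3\<^esub> e \<otimes>\<^bsub>F3\<^esub> inv\<^bsub>F3\<^esub> r = M"
    unfolding M_def using r by (simp add: mult_FreeGroup inv_FreeGroup del: red_Cons)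
  moreover have "reduced (M @ z)"
    using MS hz rz reduced_red[of "r @ replicate (nat \<bar>e\<bar>) (e < 0, j) @ winv r"]
    by (auto simp: reduced_append inv_pair_def M_def[symmetric])
  then have "M \<otimes>\<^bsub>F3\<^esub> z = M @ z"
    by (simp add: mult_FreeGroup red_reduced del: red_Cons)
  moreover obtain h t where "M = h # t" using MS by (cases M) auto
  ultimately show ?thesis using MS by (simp add: x1_head_exp_Cons_other)
qed

text \<open>Splitting off the leading x_1-syllable x_1^q of G reduces this to the case q = 0.\<close>

lemma x1_head_exp_conj_mult:
  assumes G: "G \<in> carrier F3" and j: "j \<in> {2, 3}" and e: "e \<noteq> 0" and z: "z \<in> carrier F3"
    and ne: "x1_head_exp z \<noteq> x1_head_exp G"
  shows "x1_head_exp (G \<otimes>\<^bsub>F3\<^esub> gen j [^]\<^bsub>F3\<^esub> (e::int) \<otimes>\<^bsub>F3\<^esub> inv\<^bsub>F3\<^esub> G \<otimes>\<^bsub>F3\<^esub> z) = x1_head_exp G"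
proof -
  define q where "q = x1_head_exp G"
  let ?x1 = "gen 1" and ?xj = "gen j [^]\<^bsub>F3\<^esub> e"
  have x1: "?x1 \<in> carrier F3" by (simp add: gen_carrier)
  have "gen j \<in> carrier F3" using j by (intro gen_carrier) auto
  then have xj: "?xj \<in> carrier F3" by (rule F3.int_pow_closed)
  define r where "r = ?x1 [^]\<^bsub>F3\<^esub> (- q) \<otimes>\<^bsub>F3\<^esub> G"
  define z' where "z' = ?x1 [^]\<^bsub>F3\<^esub> (- q) \<otimes>\<^bsub>F3\<^esub> z"
  have r: "r \<in> carrier F3" "x1_head_exp r = 0"
    unfolding r_def q_def using G x1 x1_head_exp_gen1_pow_mult[OF G] by auto
  have z': "z' \<in> carrier F3" "x1_head_exp z' \<noteq> 0"
    unfolding z'_def using z x1 x1_head_exp_gen1_pow_mult[OF z] ne by (auto simp: q_def)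
  have "G = ?x1 [^]\<^bsub>F3\<^esub> q \<otimes>\<^bsub>F3\<^esub> r"
    unfolding r_def using x1 G by (simp add: F3.m_assoc[symmetric] F3.int_pow_mult[symmetric])
  then have "G \<otimes>\<^bsub>F3\<^esub> ?xj \<otimes>\<^bsub>F3\<^esub> inv\<^bsub>F3\<^esub> G \<otimes>\<^bsub>F3\<^esub> z
      = ?x1 [^]\<^bsub>F3\<^esub> q \<otimes>\<^bsub>F3\<^esub> (r \<otimes>\<^bsub>F3\<^esub> ?xj \<otimes>\<^bsub>F3\<^esub> inv\<^bsub>F3\<^esub> r \<otimes>\<^bsub>F3\<^esub> z')"
    unfolding z'_def using x1 xj r z by (simp add: F3.m_assoc F3.inv_mult_group F3.int_pow_neg)
  moreover have "r \<otimes>\<^bsub>F3\<^esub> ?xj \<otimes>\<^bsub>F3\<^esub> inv\<^bsub>F3\<^esub> r \<otimes>\<^bsub>F3\<^esub> z' \<in> carrier F3"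
    using r xj z' by simp
  ultimately show ?thesis
    using x1_head_exp_gen1_pow_mult x1_head_exp_conj_mult_eq_0[OF r j e z'] by (simp add: q_def)
qed

lemma x1_head_exp_conj_mult_cases:
  assumes G: "G \<in> carrier F3" and j: "j \<in> {2, 3}" and e: "e \<noteq> 0" and z: "z \<in> carrier F3"
    and zc: "x1_head_exp z \<noteq> x1_head_exp G \<or> (\<exists>m::int. z = G \<otimes>\<^bsub>F3\<^esub> gen j [^]\<^bsub>F3\<^esub> m)"
  shows "x1_head_exp (G \<otimes>\<^bsub>F3\<^esub> gen j [^]\<^bsub>F3\<^esub> (e::int) \<otimes>\<^bsub>F3\<^esub> inv\<^bsub>F3\<^esub> G \<otimes>\<^bsub>F3\<^esub> z) = x1_head_exp G"
proof (cases "x1_head_exp z \<noteq> x1_head_exp G")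
  case True
  then show ?thesis by (rule x1_head_exp_conj_mult[OF G j e z])
next
  case False
  then obtain m :: int where m: "z = G \<otimes>\<^bsub>F3\<^esub> gen j [^]\<^bsub>F3\<^esub> m"
    using zc by auto
  have "gen j \<in> carrier F3" using j by (intro gen_carrier) auto
  then have "G \<otimes>\<^bsub>F3\<^esub> gen j [^]\<^bsub>F3\<^esub> e \<otimes>\<^bsub>F3\<^esub> inv\<^bsub>F3\<^esub> G \<otimes>\<^bsub>F3\<^esub> z = G \<otimes>\<^bsub>F3\<^esub> gen j [^]\<^bsub>F3\<^esub> (e + m)"
    using G by (simp add: m F3.m_assoc F3.int_pow_mult)
  then show ?thesis using x1_head_exp_mult_gen_pow[OF G j] by simp
qed

section \<open>Words in \<xi>_12 and \<xi>_13\<close>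

definition conj_gen :: "(nat \<Rightarrow> letter list) \<Rightarrow> nat \<Rightarrow> letter list" where
  "conj_gen g a = g a \<otimes>\<^bsub>F3\<^esub> gen a \<otimes>\<^bsub>F3\<^esub> inv\<^bsub>F3\<^esub> (g a)"

text \<open>The letters 1 and 3 of a word W stand for \<xi>_12 and \<xi>_13, which conjugate x_1 by
  x_(partner 1) = x_2 and x_(partner 3) = x_3.\<close>

definition partner :: "nat \<Rightarrow> nat" where "partner a = (if a = 1 then 2 else 3)"

definition partner_conj :: "(nat \<Rightarrow> letter list) \<Rightarrow> nat \<Rightarrow> letter list" where
  "partner_conj g a = conj_gen g (partner a)"

lemma partner_in: "partner a \<in> {2, 3}"
  by (simp add: partner_def)

lemma gen_partner_carrier: "gen (partner a) \<in> carrier F3"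
  by (simp add: partner_def gen_carrier)

lemma conj_gen_carrier:
  "g a \<in> carrier F3 \<Longrightarrow> a \<in> {1..3} \<Longrightarrow> conj_gen g a \<in> carrier F3"
  by (simp add: conj_gen_def gen_carrier)

lemma partner_conj_carrier:
  "\<forall>k\<in>{2, 3}. g k \<in> carrier F3 \<Longrightarrow> partner_conj g a \<in> carrier F3"
  using partner_in[of a] by (auto simp: partner_conj_def intro: conj_gen_carrier)

lemma conj_nat_pow:
  assumes "g \<in> carrier F3" "y \<in> carrier F3"
  shows "(g \<otimes>\<^bsub>F3\<^esub> y \<otimes>\<^bsub>F3\<^esub> inv\<^bsub>F3\<^esub> g) [^]\<^bsub>F3\<^esub> (n::nat) = g \<otimes>\<^bsub>F3\<^esub> y [^]\<^bsub>F3\<^esub> n \<otimes>\<^bsub>F3\<^esub> inv\<^bsub>F3\<^esub> g"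
proof (induction n)
  case (Suc n)
  have "(g \<otimes>\<^bsub>F3\<^esub> y \<otimes>\<^bsub>F3\<^esub> inv\<^bsub>F3\<^esub> g) [^]\<^bsub>F3\<^esub> Suc n
        = (g \<otimes>\<^bsub>F3\<^esub> y [^]\<^bsub>F3\<^esub> n \<otimes>\<^bsub>F3\<^esub> inv\<^bsub>F3\<^esub> g) \<otimes>\<^bsub>F3\<^esub> (g \<otimes>\<^bsub>F3\<^esub> y \<otimes>\<^bsub>F3\<^esub> inv\<^bsub>F3\<^esub> g)"
    using Suc by simp
  also have "\<dots> = g \<otimes>\<^bsub>F3\<^esub> (y [^]\<^bsub>F3\<^esub> n \<otimes>\<^bsub>F3\<^esub> y) \<otimes>\<^bsub>F3\<^esub> inv\<^bsub>F3\<^esub> g"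
    using assms by (simp add: F3.m_assoc)
  finally show ?case by simp
qed (use assms in simp)

lemma eval_word_replicate:
  assumes "f (snd l) \<in> carrier F3"
  shows "eval_word F3 f (replicate n l) = (eval_letter F3 f l) [^]\<^bsub>F3\<^esub> n"
proof (induction n)
  case (Suc n)
  have "eval_letter F3 f l \<in> carrier F3" using assms by (rule F3.eval_letter_closed)
  then show ?case using Suc F3.nat_pow_Suc2[symmetric] by simp
qed simp

lemma eval_word_partner_conj_replicate:
  fixes l :: letter
  assumes G: "\<forall>k\<in>{2, 3}. G k \<in> carrier F3" and n: "n > 0"
  defines "p \<equiv> partner (snd l)"
  shows "\<exists>e::int. e \<noteq> 0 \<and> eval_word F3 (partner_conj G) (replicate n l)
           = G p \<otimes>\<^bsub>F3\<^esub> gen p [^]\<^bsub>F3\<^esub> e \<otimes>\<^bsub>F3\<^esub> inv\<^bsub>F3\<^esub> (G p)"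
proof -
  have Gc: "G p \<in> carrier F3" using G partner_in unfolding p_def by blast
  have Xc: "gen p \<in> carrier F3" unfolding p_def by (rule gen_partner_carrier)
  have pow: "eval_word F3 (partner_conj G) (replicate n l) = (eval_letter F3 (partner_conj G) l) [^]\<^bsub>F3\<^esub> n"
    by (rule eval_word_replicate) (simp add: partner_conj_carrier G)
  show ?thesis
  proof (cases "fst l")
    case True
    have "eval_letter F3 (partner_conj G) l = G p \<otimes>\<^bsub>F3\<^esub> inv\<^bsub>F3\<^esub> gen p \<otimes>\<^bsub>F3\<^esub> inv\<^bsub>F3\<^esub> G p"
      using True Gc Xc
      by (simp add: eval_letter_def partner_conj_def conj_gen_def p_def F3.inv_mult_group F3.m_assoc)
    then have "eval_word F3 (partner_conj G) (replicate n l)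
        = G p \<otimes>\<^bsub>F3\<^esub> (inv\<^bsub>F3\<^esub> gen p) [^]\<^bsub>F3\<^esub> n \<otimes>\<^bsub>F3\<^esub> inv\<^bsub>F3\<^esub> G p"
      using pow conj_nat_pow[OF Gc F3.inv_closed[OF Xc]] by simp
    also have "(inv\<^bsub>F3\<^esub> gen p) [^]\<^bsub>F3\<^esub> n = gen p [^]\<^bsub>F3\<^esub> (- int n)"
      using Xc by (simp add: F3.int_pow_neg_int F3.nat_pow_inv)
    finally show ?thesis using n by (intro exI[of _ "- int n"]) simp
  next
    case False
    have "eval_letter F3 (partner_conj G) l = G p \<otimes>\<^bsub>F3\<^esub> gen p \<otimes>\<^bsub>F3\<^esub> inv\<^bsub>F3\<^esub> G p"
      using False by (simp add: eval_letter_def partner_conj_def conj_gen_def p_def)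
    then have "eval_word F3 (partner_conj G) (replicate n l) = G p \<otimes>\<^bsub>F3\<^esub> gen p [^]\<^bsub>F3\<^esub> n \<otimes>\<^bsub>F3\<^esub> inv\<^bsub>F3\<^esub> G p"
      using pow conj_nat_pow[OF Gc Xc] by simp
    also have "gen p [^]\<^bsub>F3\<^esub> n = gen p [^]\<^bsub>F3\<^esub> (int n)"
      by (simp add: int_pow_int)
    finally show ?thesis using n by (intro exI[of _ "int n"]) simp
  qed
qed

lemma takeWhile_eq_replicate: "takeWhile (\<lambda>x. x = c) v = replicate (length (takeWhile (\<lambda>x. x = c) v)) c"
  by (induction v) auto

lemma first_syllable:
  assumes "v \<noteq> []"
  obtains n rest where "n > 0" "v = replicate n (hd v) @ rest" "rest \<noteq> [] \<Longrightarrow> hd rest \<noteq> hd v"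
proof -
  let ?P = "\<lambda>x. x = hd v"
  have "v = replicate (length (takeWhile ?P v)) (hd v) @ dropWhile ?P v"
    by (metis takeWhile_dropWhile_id takeWhile_eq_replicate)
  moreover have "length (takeWhile ?P v) > 0" using assms by (cases v) auto
  moreover have "dropWhile ?P v \<noteq> [] \<Longrightarrow> hd (dropWhile ?P v) \<noteq> hd v"
    using hd_dropWhile by blast
  ultimately show ?thesis using that by blast
qed

text \<open>Consecutive syllables have different partners, so
  each factor G p x_p^e (G p)^-1 is followed by a factor whose leading x_1-exponent differs
  from that of G p, and x1_head_exp_conj_mult applies.\<close>

lemma x1_head_exp_eval_partner_conj_mult:
  assumes G: "\<forall>k\<in>{2, 3}. G k \<in> carrier F3" and ne: "x1_head_exp (G 2) \<noteq> x1_head_exp (G 3)"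
  shows "reduced v \<Longrightarrow> v \<noteq> [] \<Longrightarrow> \<forall>l\<in>set v. snd l \<in> {1, 3} \<Longrightarrow> z \<in> carrier F3 \<Longrightarrow>
    x1_head_exp z \<noteq> x1_head_exp (G (partner (snd (last v)))) \<or>
      (\<exists>m::int. z = G (partner (snd (last v))) \<otimes>\<^bsub>F3\<^esub> gen (partner (snd (last v))) [^]\<^bsub>F3\<^esub> m) \<Longrightarrow>
    x1_head_exp (eval_word F3 (partner_conj G) v \<otimes>\<^bsub>F3\<^esub> z) = x1_head_exp (G (partner (snd (hd v))))"
proof (induction "length v" arbitrary: v z rule: less_induct)
  case less
  note rv = less.prems(1) and vne = less.prems(2) and vl = less.prems(3) and zc = less.prems(4)
    and zcond = less.prems(5)
  define l where "l = hd v"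
  obtain n rest where n: "n > 0" and vsplit: "v = replicate n l @ rest"
    and hne: "rest \<noteq> [] \<Longrightarrow> hd rest \<noteq> l"
    using first_syllable[OF vne] unfolding l_def by blast
  define p where "p = partner (snd l)"
  have Gc: "G p \<in> carrier F3" using G partner_in unfolding p_def by blast
  have Xc: "gen p \<in> carrier F3" unfolding p_def by (rule gen_partner_carrier)
  have p23: "p \<in> {2, 3}" unfolding p_def by (rule partner_in)
  have Qc: "\<forall>l\<in>set w. partner_conj G (snd l) \<in> carrier F3" for w
    using G by (simp add: partner_conj_carrier)
  obtain e :: int where e: "e \<noteq> 0"
    and eb: "eval_word F3 (partner_conj G) (replicate n l)
      = G p \<otimes>\<^bsub>F3\<^esub> gen p [^]\<^bsub>F3\<^esub> e \<otimes>\<^bsub>F3\<^esub> inv\<^bsub>F3\<^esub> G p"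
    using eval_word_partner_conj_replicate[OF G n, where l = l] unfolding p_def by blast
  let ?R = "eval_word F3 (partner_conj G) rest"
  have Rc: "?R \<in> carrier F3" by (rule F3.eval_word_closed[OF Qc])
  have evv: "eval_word F3 (partner_conj G) v \<otimes>\<^bsub>F3\<^esub> z
      = G p \<otimes>\<^bsub>F3\<^esub> gen p [^]\<^bsub>F3\<^esub> e \<otimes>\<^bsub>F3\<^esub> inv\<^bsub>F3\<^esub> G p \<otimes>\<^bsub>F3\<^esub> (?R \<otimes>\<^bsub>F3\<^esub> z)"
    using Gc Xc zc Rc by (simp add: vsplit F3.eval_word_append[OF Qc Qc] eb F3.m_assoc)
  show ?case
  proof (cases "rest = []")
    case True
    then have "snd (last v) = snd l" using vsplit n by simp
    then show ?thesis
      using evv \<open>rest = []\<close> zc zcond x1_head_exp_conj_mult_cases[OF Gc p23 e zc]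
      by (simp add: l_def p_def)
  next
    case False
    have "reduced (replicate n l @ rest)" using rv vsplit by simp
    then have rr: "reduced rest" and bd: "\<not> inv_pair l (hd rest)"
      using False n unfolding reduced_append by auto
    have sne: "snd (hd rest) \<noteq> snd l"
      using bd hne[OF False] by (cases l; cases "hd rest") (auto simp: inv_pair_def)
    have vlr: "\<forall>l\<in>set rest. snd l \<in> {1, 3}" using vl vsplit by auto
    have IH: "x1_head_exp (?R \<otimes>\<^bsub>F3\<^esub> z) = x1_head_exp (G (partner (snd (hd rest))))"
      using less.hyps[of rest z] vsplit n rr False vlr zc zcond by simp
    have "snd l \<in> {1, 3}" "snd (hd rest) \<in> {1, 3}"
      using vl vlr vne False by (auto simp: l_def)
    then have "x1_head_exp (G (partner (snd (hd rest)))) \<noteq> x1_head_exp (G p)"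
      using sne ne by (auto simp: p_def partner_def)
    then show ?thesis using evv x1_head_exp_conj_mult[OF Gc p23 e] Rc zc IH
      by (simp add: l_def p_def)
  qed
qed

section \<open>Inner automorphisms\<close>

definition conj_aut :: "letter list \<Rightarrow> letter list \<Rightarrow> letter list" where
  "conj_aut t = (\<lambda>w\<in>carrier F3. t \<otimes>\<^bsub>F3\<^esub> w \<otimes>\<^bsub>F3\<^esub> inv\<^bsub>F3\<^esub> t)"

lemma conj_aut_apply:
  "w \<in> carrier F3 \<Longrightarrow> conj_aut t w = t \<otimes>\<^bsub>F3\<^esub> w \<otimes>\<^bsub>F3\<^esub> inv\<^bsub>F3\<^esub> t"
  by (simp add: conj_aut_def)

lemma conj_aut_endo: "t \<in> carrier F3 \<Longrightarrow> conj_aut t \<in> hom F3 F3"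
  by (rule homI) (auto simp: conj_aut_def F3.m_assoc)

lemma conj_aut_bij: "t \<in> carrier F3 \<Longrightarrow> conj_aut t \<in> Bij (carrier F3)"
  using F3.conjugation_is_hom unfolding conj_aut_def hom_def BijGroup_def by auto

lemma conj_aut_auto: "t \<in> carrier F3 \<Longrightarrow> conj_aut t \<in> auto F3"
  by (simp add: auto_def conj_aut_endo conj_aut_bij)

lemma conj_aut_hom: "conj_aut \<in> hom F3 AutF3"
proof (rule homI)
  fix t assume "t \<in> carrier F3" then show "conj_aut t \<in> carrier AutF3"
    by (simp add: F3.carrier_AutoGroup conj_aut_auto)
next
  fix s t assume s: "s \<in> carrier F3" and t: "t \<in> carrier F3"
  have "conj_aut (s \<otimes>\<^bsub>F3\<^esub> t) = conj_aut s \<otimes>\<^bsub>BijGroup (carrier F3)\<^esub> conj_aut t"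
    using F3.conjugation_is_hom s t unfolding conj_aut_def hom_def by auto
  then show "conj_aut (s \<otimes>\<^bsub>F3\<^esub> t) = conj_aut s \<otimes>\<^bsub>AutF3\<^esub> conj_aut t"
    by (simp add: AutoGroup_def)
qed

interpretation inner: group_hom F3 AutF3 conj_aut
  by (simp add: group_hom_def group_hom_axioms_def group_F3 group_AutF3 conj_aut_hom)

lemma AutF3_conj_conj_aut:
  assumes \<sigma>: "\<sigma> \<in> auto F3" and t: "t \<in> carrier F3"
  shows "\<sigma> \<otimes>\<^bsub>AutF3\<^esub> conj_aut t \<otimes>\<^bsub>AutF3\<^esub> inv\<^bsub>AutF3\<^esub> \<sigma> = conj_aut (\<sigma> t)"
proof -
  have \<sigma>i: "inv\<^bsub>AutF3\<^esub> \<sigma> \<in> auto F3"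
    using \<sigma> by (rule F3.auto_inv_closed)
  have st: "\<sigma> t \<in> carrier F3" using \<sigma> t by (rule F3.auto_closed)
  have pa: "conj_aut t \<in> auto F3" using t by (rule conj_aut_auto)
  have c1: "\<sigma> \<otimes>\<^bsub>AutF3\<^esub> conj_aut t \<in> auto F3"
    using \<sigma> pa Aut.m_closed by (simp add: F3.carrier_AutoGroup)
  have l: "\<sigma> \<otimes>\<^bsub>AutF3\<^esub> conj_aut t \<otimes>\<^bsub>AutF3\<^esub> inv\<^bsub>AutF3\<^esub> \<sigma> \<in> auto F3"
    using c1 \<sigma>i Aut.m_closed by (simp add: F3.carrier_AutoGroup)
  interpret s: group_hom F3 F3 \<sigma> by (rule F3.auto_group_hom[OF \<sigma>])
  show ?thesis
  proof (rule extensionalityI[OF F3.auto_extensional[OF l] F3.auto_extensional[OF conj_aut_auto[OF st]]])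
    fix w assume w: "w \<in> carrier F3"
    have iw: "(inv\<^bsub>AutF3\<^esub> \<sigma>) w \<in> carrier F3"
      using \<sigma>i w by (rule F3.auto_closed)
    have "(\<sigma> \<otimes>\<^bsub>AutF3\<^esub> conj_aut t \<otimes>\<^bsub>AutF3\<^esub> inv\<^bsub>AutF3\<^esub> \<sigma>) w = \<sigma> (conj_aut t ((inv\<^bsub>AutF3\<^esub> \<sigma>) w))"
      using c1 \<sigma>i w \<sigma> pa iw by (simp add: F3.AutoGroup_mult_apply)
    also have "\<dots> = \<sigma> t \<otimes>\<^bsub>F3\<^esub> \<sigma> ((inv\<^bsub>AutF3\<^esub> \<sigma>) w) \<otimes>\<^bsub>F3\<^esub> inv\<^bsub>F3\<^esub> (\<sigma> t)"
      using iw t by (simp add: conj_aut_apply)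
    also have "\<dots> = conj_aut (\<sigma> t) w"
      using F3.AutoGroup_inv_apply[OF \<sigma> w] w by (simp add: conj_aut_apply)
    finally show "(\<sigma> \<otimes>\<^bsub>AutF3\<^esub> conj_aut t \<otimes>\<^bsub>AutF3\<^esub> inv\<^bsub>AutF3\<^esub> \<sigma>) w = conj_aut (\<sigma> t) w" .
  qed
qed

lemma conj_aut_fixed_commute:
  assumes t: "t \<in> carrier F3" and x: "x \<in> carrier F3" and e: "conj_aut t x = x"
  shows "t \<otimes>\<^bsub>F3\<^esub> x = x \<otimes>\<^bsub>F3\<^esub> t"
proof -
  have "t \<otimes>\<^bsub>F3\<^esub> x \<otimes>\<^bsub>F3\<^esub> inv\<^bsub>F3\<^esub> t \<otimes>\<^bsub>F3\<^esub> t = x \<otimes>\<^bsub>F3\<^esub> t"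
    using e x by (simp add: conj_aut_apply)
  then show ?thesis using t x by (simp add: F3.m_assoc)
qed

text \<open>F_3 has trivial centre: an element commuting with x_1 and x_2 is a power of both.\<close>

lemma conj_aut_eq_one:
  assumes t: "t \<in> carrier F3" and e: "conj_aut t = \<one>\<^bsub>AutF3\<^esub>"
  shows "t = \<one>\<^bsub>F3\<^esub>"
proof -
  have commute: "t \<otimes>\<^bsub>F3\<^esub> gen a = gen a \<otimes>\<^bsub>F3\<^esub> t" if "a \<in> {1..3}" for a
    using conj_aut_fixed_commute[OF t gen_carrier[OF that]] e that
    by (simp add: F3.AutoGroup_one gen_carrier)
  obtain m :: int where m: "t = gen 1 [^]\<^bsub>F3\<^esub> m"
    using centraliser_gen[OF t _ commute] by fastforce
  obtain k :: int where k: "t = gen 2 [^]\<^bsub>F3\<^esub> k"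
    using centraliser_gen[OF t _ commute] by fastforce
  have one: "x1_head_exp \<one>\<^bsub>F3\<^esub> = 0" by (simp add: one_FreeGroup x1_head_exp_def)
  then have "x1_head_exp t = m"
    using x1_head_exp_gen1_pow_mult[of "\<one>\<^bsub>F3\<^esub>" m] m gen_carrier[of 1 3] by simp
  moreover have "x1_head_exp t = 0"
    using one x1_head_exp_mult_gen_pow[of "\<one>\<^bsub>F3\<^esub>" 2 k] k gen_carrier[of 2 3]
    by simp
  ultimately show ?thesis using m by simp
qed

lemma conj_aut_inj: "inj_on conj_aut (carrier F3)"
  unfolding inner.inj_iff_trivial_ker by (auto simp: kernel_def intro: conj_aut_eq_one)

lemma nu_eq_conj_aut: "i \<in> {1..3} \<Longrightarrow> nu i = conj_aut (inv\<^bsub>F3\<^esub> (gen i))"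
proof -
  assume i: "i \<in> {1..3}"
  have gi: "gen i \<in> carrier F3" using i by (rule gen_carrier)
  show ?thesis
  proof (rule ext)
    fix w show "nu i w = conj_aut (inv\<^bsub>F3\<^esub> (gen i)) w"
    proof (cases "w \<in> carrier F3")
      case True
      have "conj_aut (inv\<^bsub>F3\<^esub> (gen i)) w = inv\<^bsub>F3\<^esub> (gen i) \<otimes>\<^bsub>F3\<^esub> w \<otimes>\<^bsub>F3\<^esub> gen i"
        by (simp only: conj_aut_apply[OF True] F3.inv_inv[OF gi])
      also have "\<dots> = red (red (winv (gen i) @ w) @ gen i)"
        using gi by (simp add: inv_FreeGroup mult_FreeGroup del: red_Cons)
      finally have "conj_aut (inv\<^bsub>F3\<^esub> (gen i)) w = red (red (winv (gen i) @ w) @ gen i)" .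
      then show ?thesis using True by (simp add: nu_def del: red_Cons)
    next
      case False then show ?thesis by (simp add: nu_def conj_aut_def)
    qed
  qed
qed

lemma nu_auto: "i \<in> {1..3} \<Longrightarrow> nu i \<in> auto F3"
  using nu_eq_conj_aut conj_aut_auto gen_carrier by (metis F3.inv_closed)

section \<open>The groups P\<Sigma>_3 and V_3\<close>

definition XI :: "(letter list \<Rightarrow> letter list) set" where
  "XI = {xi i j | i j. i \<in> {1..3} \<and> j \<in> {1..3} \<and> i \<noteq> j}"
definition NU :: "(letter list \<Rightarrow> letter list) set" where
  "NU = {nu 1, nu 2, nu 3}"

lemma PSigma3_eq_subgroup_generated: "PSigma3 = subgroup_generated AutF3 XI"
  by (simp add: PSigma3_def XI_def)
lemma XI_auto: "XI \<subseteq> auto F3" using xi_auto_inverse by (auto simp: XI_def)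
lemma XI_carrier: "XI \<subseteq> carrier AutF3" using XI_auto by (simp add: F3.carrier_AutoGroup)

lemma carrier_PSigma3: "carrier PSigma3 = generate AutF3 XI"
  using XI_carrier
  by (simp add: PSigma3_eq_subgroup_generated carrier_subgroup_generated Int_absorb1)

lemma PSigma3_is_restriction: "PSigma3 = AutF3\<lparr>carrier := carrier PSigma3\<rparr>"
  by (simp add: PSigma3_eq_subgroup_generated subgroup_generated_def carrier_subgroup_generated)

lemma group_PSigma3: "group PSigma3" by (simp add: PSigma3_eq_subgroup_generated)

interpretation P: group PSigma3 by (rule group_PSigma3)

lemma subgroup_PSigma3: "subgroup (carrier PSigma3) AutF3"
  unfolding carrier_PSigma3 by (rule Aut.generate_is_subgroup[OF XI_carrier])

lemma PSigma3_auto: "x \<in> carrier PSigma3 \<Longrightarrow> x \<in> auto F3"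
  using subgroup.subset[OF subgroup_PSigma3] by (auto simp: F3.carrier_AutoGroup)

lemma mult_PSigma3[simp]: "x \<otimes>\<^bsub>PSigma3\<^esub> y = x \<otimes>\<^bsub>AutF3\<^esub> y"
  by (simp add: PSigma3_eq_subgroup_generated)
lemma one_PSigma3[simp]: "\<one>\<^bsub>PSigma3\<^esub> = \<one>\<^bsub>AutF3\<^esub>"
  by (simp add: PSigma3_eq_subgroup_generated)
lemma inv_PSigma3: "x \<in> carrier PSigma3 \<Longrightarrow> inv\<^bsub>PSigma3\<^esub> x = inv\<^bsub>AutF3\<^esub> x"
  unfolding PSigma3_eq_subgroup_generated
  by (rule Aut.inv_subgroup_generated) (simp add: PSigma3_eq_subgroup_generated[symmetric])

lemma xi_in_PSigma3:
  "i \<in> {1..3} \<Longrightarrow> j \<in> {1..3} \<Longrightarrow> i \<noteq> j \<Longrightarrow> xi i j \<in> carrier PSigma3"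
  unfolding carrier_PSigma3 by (rule generate.incl) (auto simp: XI_def)

lemma xi_auto:
  "i \<in> {1..3} \<Longrightarrow> j \<in> {1..3} \<Longrightarrow> i \<noteq> j \<Longrightarrow> xi i j \<in> auto F3"
  using xi_auto_inverse by auto

lemma nu_gen: "a \<in> {1..3} \<Longrightarrow> nu i (gen a) = red ([(True, i)] @ [(False, a)] @ [(False, i)])"
proof -
  assume "a \<in> {1..3}"
  then have ga: "gen a \<in> carrier F3" by (rule gen_carrier)
  then show ?thesis unfolding nu_def by (simp add: gen_def winv_def del: red_Cons)
qed

lemma AutF3_mult_eqI:
  assumes f: "f \<in> auto F3" and g: "g \<in> auto F3" and h: "h \<in> auto F3"
    and e1: "h (gen 1) = f (g (gen 1))" and e2: "h (gen 2) = f (g (gen 2))" and e3: "h (gen 3) = f (g (gen 3))"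
  shows "h = f \<otimes>\<^bsub>AutF3\<^esub> g"
proof (rule auto_FreeGroup_eq_on_gens[OF h])
  show "f \<otimes>\<^bsub>AutF3\<^esub> g \<in> auto F3"
    using Aut.m_closed f g by (simp add: F3.carrier_AutoGroup)
  show "\<forall>a\<in>{1..3}. h (gen a) = (f \<otimes>\<^bsub>AutF3\<^esub> g) (gen a)"
  proof
    fix a :: nat assume "a \<in> {1..3}"
    then have "a = 1 \<or> a = 2 \<or> a = 3" by auto
    then show "h (gen a) = (f \<otimes>\<^bsub>AutF3\<^esub> g) (gen a)"
      using e1 e2 e3 f g by (auto simp: F3.AutoGroup_mult_apply gen_carrier)
  qed
qed

text \<open>Instances of xi_apply for literal words, on which the simplifier can then evaluate xi.\<close>

lemma xi_apply_3letters:
  "[x, y, z] \<in> carrier F3 \<Longrightarrow> xi i j [x, y, z] = subst (xi_subst i j) [x, y, z]"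
  by (rule xi_apply)
lemma xi_apply_letter: "[x] \<in> carrier F3 \<Longrightarrow> xi i j [x] = subst (xi_subst i j) [x]"
  by (rule xi_apply)

lemmas nu_xi_eval_simps = nu_gen xi_gen xi_subst_def xi_apply_3letters xi_apply_letter carrier_FreeGroup subst_def winv_def cancel_cons_def inv_pair_def

lemma nu_eq_xi_mult:
  "nu 1 = xi 3 1 \<otimes>\<^bsub>AutF3\<^esub> xi 2 1"
  "nu 2 = xi 3 2 \<otimes>\<^bsub>AutF3\<^esub> xi 1 2"
  "nu 3 = xi 2 3 \<otimes>\<^bsub>AutF3\<^esub> xi 1 3"
  by (rule AutF3_mult_eqI; simp add: xi_auto nu_auto nu_xi_eval_simps)+

lemma nu_in_PSigma3: "nu 1 \<in> carrier PSigma3" "nu 2 \<in> carrier PSigma3" "nu 3 \<in> carrier PSigma3"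
  by (simp_all only: nu_eq_xi_mult mult_PSigma3[symmetric]) (rule P.m_closed; rule xi_in_PSigma3; simp)+

lemma NU_subset_PSigma3: "NU \<subseteq> carrier PSigma3" using nu_in_PSigma3 by (auto simp: NU_def)

lemma V3_eq_generate_PSigma3: "V3 = generate PSigma3 NU" by (simp add: V3_def NU_def)

lemma V3_eq_generate_AutF3: "V3 = generate AutF3 NU"
proof -
  have "generate (AutF3\<lparr>carrier := carrier PSigma3\<rparr>) NU = generate AutF3 NU"
    by (rule Aut.generate_consistent[OF NU_subset_PSigma3 subgroup_PSigma3])
  then show ?thesis using PSigma3_is_restriction V3_eq_generate_PSigma3 by metis
qed

lemma conj_aut_gen_eq_inv_nu: "a \<in> {1..3} \<Longrightarrow> conj_aut (gen a) = inv\<^bsub>AutF3\<^esub> (nu a)"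
proof -
  assume a: "a \<in> {1..3}"
  then have ga: "gen a \<in> carrier F3" by (rule gen_carrier)
  have "nu a = inv\<^bsub>AutF3\<^esub> (conj_aut (gen a))" using nu_eq_conj_aut[OF a] ga by simp
  then show ?thesis using ga inner.hom_closed by simp
qed

lemma V3_eq_conj_aut_image: "V3 = conj_aut ` carrier F3"
proof
  have ni: "nu a \<in> conj_aut ` carrier F3" if "a \<in> {1..3}" for a
    using nu_eq_conj_aut[OF that] F3.inv_closed[OF gen_carrier[OF that]] by (metis image_eqI)
  have "NU \<subseteq> conj_aut ` carrier F3"
    using ni[of 1] ni[of 2] ni[of 3] by (auto simp: NU_def)
  then show "V3 \<subseteq> conj_aut ` carrier F3"
    unfolding V3_eq_generate_AutF3 by (rule Aut.generate_subgroup_incl[OF _ inner.img_is_subgroup])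
next
  show "conj_aut ` carrier F3 \<subseteq> V3"
  proof
    fix x assume "x \<in> conj_aut ` carrier F3"
    then obtain t where t: "t \<in> carrier F3" and x: "x = conj_aut t" by auto
    have "t \<in> generate F3 (gen ` {1..3})" using t carrier_FreeGroup_generate[of 3] by simp
    then have "conj_aut t \<in> generate AutF3 NU"
    proof (induction rule: generate.induct)
      case one then show ?case using generate.one[of AutF3 NU] by simp
    next
      case (incl h)
      then obtain a where a: "a \<in> {1..3}" and h: "h = gen a" by auto
      have "a = 1 \<or> a = 2 \<or> a = 3" using a by auto
      then have "nu a \<in> NU" by (auto simp: NU_def)
      then show ?case using generate.inv[of "nu a" NU AutF3] conj_aut_gen_eq_inv_nu[OF a] h by simp
    next
      case (inv h)
      then obtain a where a: "a \<in> {1..3}" and h: "h = gen a" by auto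
      have "a = 1 \<or> a = 2 \<or> a = 3" using a by auto
      then have "nu a \<in> NU" by (auto simp: NU_def)
      then show ?case using generate.incl[of "nu a" NU AutF3] nu_eq_conj_aut[OF a] h by simp
    next
      case (eng h1 h2)
      have "h1 \<in> carrier F3" "h2 \<in> carrier F3"
        using eng.hyps(1,2) carrier_FreeGroup_generate[of 3] by auto
      then show ?case using generate.eng[OF eng.IH] by simp
    qed
    then show "x \<in> V3" using x V3_eq_generate_AutF3 by simp
  qed
qed

lemma carrier_V3grp: "carrier V3grp = V3"
  using NU_subset_PSigma3
  by (simp add: V3grp_def carrier_subgroup_generated V3_eq_generate_PSigma3 NU_def Int_absorb1)

lemma mult_V3grp[simp]: "x \<otimes>\<^bsub>V3grp\<^esub> y = x \<otimes>\<^bsub>AutF3\<^esub> y"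
  by (simp add: V3grp_def)

lemma conj_aut_iso_V3grp: "conj_aut \<in> iso F3 V3grp"
proof -
  have "conj_aut \<in> hom F3 V3grp"
    by (rule homI) (auto simp: carrier_V3grp V3_eq_conj_aut_image)
  moreover have "bij_betw conj_aut (carrier F3) (carrier V3grp)"
    using conj_aut_inj by (simp add: bij_betw_def carrier_V3grp V3_eq_conj_aut_image)
  ultimately show ?thesis by (simp add: iso_def)
qed

lemma V3grp_iso_F3: "V3grp \<cong> F3"
  using conj_aut_iso_V3grp F3.iso_sym by (auto simp: is_iso_def)

lemma V3_subset_PSigma3: "V3 \<subseteq> carrier PSigma3"
  unfolding V3_eq_generate_PSigma3 by (rule P.generate_incl[OF NU_subset_PSigma3])

lemma V3_normal: "V3 \<lhd> PSigma3"
proof (rule P.normal_invI)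
  show "subgroup V3 PSigma3" unfolding V3_eq_generate_PSigma3
    by (rule P.generate_is_subgroup[OF NU_subset_PSigma3])
next
  fix x h assume x: "x \<in> carrier PSigma3" and h: "h \<in> V3"
  then obtain t where t: "t \<in> carrier F3" and ht: "h = conj_aut t"
    using V3_eq_conj_aut_image by auto
  have xa: "x \<in> auto F3" using x by (rule PSigma3_auto)
  have "x \<otimes>\<^bsub>PSigma3\<^esub> h \<otimes>\<^bsub>PSigma3\<^esub> inv\<^bsub>PSigma3\<^esub> x = conj_aut (x t)"
    using AutF3_conj_conj_aut[OF xa t] x ht by (simp add: inv_PSigma3)
  then show "x \<otimes>\<^bsub>PSigma3\<^esub> h \<otimes>\<^bsub>PSigma3\<^esub> inv\<^bsub>PSigma3\<^esub> x \<in> V3"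
    using F3.auto_closed[OF xa t] V3_eq_conj_aut_image by (metis image_eqI)
qed

section \<open>The invariant of basis-conjugating automorphisms\<close>

definition basis_conj :: "(letter list \<Rightarrow> letter list) \<Rightarrow> (nat \<Rightarrow> letter list) \<Rightarrow> bool" where
  "basis_conj \<omega> g \<longleftrightarrow> (\<forall>a\<in>{1..3}. g a \<in> carrier F3 \<and> \<omega> (gen a) = conj_gen g a)"

definition head_exp_gap :: "(nat \<Rightarrow> letter list) \<Rightarrow> int" where
  "head_exp_gap g = x1_head_exp (inv\<^bsub>F3\<^esub> (g 1) \<otimes>\<^bsub>F3\<^esub> g 2) - x1_head_exp (inv\<^bsub>F3\<^esub> (g 1) \<otimes>\<^bsub>F3\<^esub> g 3)"

lemma basis_conj_carrier:
  "basis_conj \<omega> g \<Longrightarrow> a \<in> {1..3} \<Longrightarrow> g a \<in> carrier F3"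
  by (simp add: basis_conj_def conj_gen_def)

lemma xi_subst_as_product:
  assumes "i \<in> {1..3}" "j \<in> {1..3}" "i \<noteq> j"
  shows "[(True, j), (False, i), (False, j)] = inv\<^bsub>F3\<^esub> (gen j) \<otimes>\<^bsub>F3\<^esub> gen i \<otimes>\<^bsub>F3\<^esub> gen j"
    and "[(False, j), (False, i), (True, j)] = gen j \<otimes>\<^bsub>F3\<^esub> gen i \<otimes>\<^bsub>F3\<^esub> inv\<^bsub>F3\<^esub> (gen j)"
proof -
  have ij: "inv\<^bsub>F3\<^esub> (gen j) = [(True, j)]" using assms by (simp add: inv_gen)
  show "[(True, j), (False, i), (False, j)] = inv\<^bsub>F3\<^esub> (gen j) \<otimes>\<^bsub>F3\<^esub> gen i \<otimes>\<^bsub>F3\<^esub> gen j"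
    unfolding ij using assms by (simp add: mult_FreeGroup gen_def cancel_cons_def inv_pair_def)
  show "[(False, j), (False, i), (True, j)] = gen j \<otimes>\<^bsub>F3\<^esub> gen i \<otimes>\<^bsub>F3\<^esub> inv\<^bsub>F3\<^esub> (gen j)"
    unfolding ij using assms by (simp add: mult_FreeGroup gen_def cancel_cons_def inv_pair_def)
qed

lemma basis_conj_mult:
  assumes st: "basis_conj \<omega> g" and \<omega>: "\<omega> \<in> auto F3" and \<phi>: "\<phi> \<in> auto F3"
    and i: "i \<in> {1..3}" and c: "c \<in> carrier F3"
    and \<phi>i: "\<phi> (gen i) = c \<otimes>\<^bsub>F3\<^esub> gen i \<otimes>\<^bsub>F3\<^esub> inv\<^bsub>F3\<^esub> c"
    and \<phi>a: "\<And>a. a \<in> {1..3} \<Longrightarrow> a \<noteq> i \<Longrightarrow> \<phi> (gen a) = gen a"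
  shows "basis_conj (\<omega> \<otimes>\<^bsub>AutF3\<^esub> \<phi>) (g(i := \<omega> c \<otimes>\<^bsub>F3\<^esub> g i))"
  unfolding basis_conj_def
proof (intro ballI conjI)
  interpret w: group_hom F3 F3 \<omega> by (rule F3.auto_group_hom[OF \<omega>])
  fix a :: nat assume a: "a \<in> {1..3}"
  have gi: "g i \<in> carrier F3" "gen i \<in> carrier F3"
    using st i by (auto simp: basis_conj_def gen_carrier)
  have wc: "\<omega> c \<in> carrier F3" using c by simp
  show "(g(i := \<omega> c \<otimes>\<^bsub>F3\<^esub> g i)) a \<in> carrier F3"
    using st a gi wc by (auto simp: basis_conj_def)
  show "(\<omega> \<otimes>\<^bsub>AutF3\<^esub> \<phi>) (gen a) = conj_gen (g(i := \<omega> c \<otimes>\<^bsub>F3\<^esub> g i)) a"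
  proof (cases "a = i")
    case True
    have "(\<omega> \<otimes>\<^bsub>AutF3\<^esub> \<phi>) (gen a) = \<omega> c \<otimes>\<^bsub>F3\<^esub> conj_gen g i \<otimes>\<^bsub>F3\<^esub> inv\<^bsub>F3\<^esub> (\<omega> c)"
      using True \<omega> \<phi> gi c st i
      by (simp add: F3.AutoGroup_mult_apply \<phi>i basis_conj_def)
    also have "\<dots> = conj_gen (g(i := \<omega> c \<otimes>\<^bsub>F3\<^esub> g i)) a"
      using True gi wc by (simp add: conj_gen_def F3.m_assoc F3.inv_mult_group)
    finally show ?thesis .
  next
    case False
    then show ?thesis using st a \<omega> \<phi>
      by (simp add: F3.AutoGroup_mult_apply gen_carrier \<phi>a basis_conj_def conj_gen_def)
  qed
qed

lemma basis_conj_mult_xi: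
  assumes st: "basis_conj \<omega> g" and \<omega>: "\<omega> \<in> auto F3"
    and i: "i \<in> {1..3}" and j: "j \<in> {1..3}" and ij: "i \<noteq> j"
  shows "basis_conj (\<omega> \<otimes>\<^bsub>AutF3\<^esub> xi i j) (g(i := inv\<^bsub>F3\<^esub> (conj_gen g j) \<otimes>\<^bsub>F3\<^esub> g i))"
    and "basis_conj (\<omega> \<otimes>\<^bsub>AutF3\<^esub> xi_inv i j) (g(i := conj_gen g j \<otimes>\<^bsub>F3\<^esub> g i))"
proof -
  interpret w: group_hom F3 F3 \<omega> by (rule F3.auto_group_hom[OF \<omega>])
  have gj: "gen j \<in> carrier F3" using j by (rule gen_carrier)
  have wj: "\<omega> (gen j) = conj_gen g j" using st j by (simp add: basis_conj_def)
  show "basis_conj (\<omega> \<otimes>\<^bsub>AutF3\<^esub> xi i j) (g(i := inv\<^bsub>F3\<^esub> (conj_gen g j) \<otimes>\<^bsub>F3\<^esub> g i))"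
  proof -
    have "xi i j (gen i) = inv\<^bsub>F3\<^esub> (gen j) \<otimes>\<^bsub>F3\<^esub> gen i \<otimes>\<^bsub>F3\<^esub> inv\<^bsub>F3\<^esub> (inv\<^bsub>F3\<^esub> (gen j))"
      using i j ij gj by (simp add: xi_gen xi_subst_def xi_subst_as_product(1))
    then show ?thesis
      using basis_conj_mult[OF st \<omega> xi_auto_inverse(1)[OF i j ij] i F3.inv_closed[OF gj]] i j ij gj wj
      by (simp add: xi_gen_other)
  qed
  show "basis_conj (\<omega> \<otimes>\<^bsub>AutF3\<^esub> xi_inv i j) (g(i := conj_gen g j \<otimes>\<^bsub>F3\<^esub> g i))"
  proof -
    have "xi_inv i j (gen i) = gen j \<otimes>\<^bsub>F3\<^esub> gen i \<otimes>\<^bsub>F3\<^esub> inv\<^bsub>F3\<^esub> (gen j)"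
      using i j ij by (simp add: xi_inv_gen xi_inv_subst_def xi_subst_as_product(2))
    then show ?thesis
      using basis_conj_mult[OF st \<omega> xi_auto_inverse(2)[OF i j ij] i gj] i j ij gj wj
      by (simp add: xi_inv_gen_other)
  qed
qed

lemma basis_conj_one: "basis_conj \<one>\<^bsub>AutF3\<^esub> (\<lambda>a. \<one>\<^bsub>F3\<^esub>)"
  by (auto simp: basis_conj_def conj_gen_def F3.AutoGroup_one gen_carrier)

lemma basis_conj_conj_aut: "t \<in> carrier F3 \<Longrightarrow> basis_conj (conj_aut t) (\<lambda>a. t)"
  by (auto simp: basis_conj_def conj_gen_def conj_aut_apply gen_carrier)

lemma head_exp_gap_const: "t \<in> carrier F3 \<Longrightarrow> head_exp_gap (\<lambda>a. t) = 0"
  by (simp add: head_exp_gap_def)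

lemma conj_gen_eq_imp_right_pow:
  assumes g: "g \<in> carrier F3" and h: "h \<in> carrier F3" and a: "a \<in> {1..3}"
    and e: "g \<otimes>\<^bsub>F3\<^esub> gen a \<otimes>\<^bsub>F3\<^esub> inv\<^bsub>F3\<^esub> g = h \<otimes>\<^bsub>F3\<^esub> gen a \<otimes>\<^bsub>F3\<^esub> inv\<^bsub>F3\<^esub> h"
  shows "\<exists>m::int. h = g \<otimes>\<^bsub>F3\<^esub> gen a [^]\<^bsub>F3\<^esub> m"
proof -
  have x: "gen a \<in> carrier F3" using a by (rule gen_carrier)
  define k where "k = inv\<^bsub>F3\<^esub> g \<otimes>\<^bsub>F3\<^esub> h"
  have kc: "k \<in> carrier F3" using g h by (simp add: k_def)
  have "inv\<^bsub>F3\<^esub> g \<otimes>\<^bsub>F3\<^esub> (g \<otimes>\<^bsub>F3\<^esub> gen a \<otimes>\<^bsub>F3\<^esub> inv\<^bsub>F3\<^esub> g) \<otimes>\<^bsub>F3\<^esub> h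
      = inv\<^bsub>F3\<^esub> g \<otimes>\<^bsub>F3\<^esub> (h \<otimes>\<^bsub>F3\<^esub> gen a \<otimes>\<^bsub>F3\<^esub> inv\<^bsub>F3\<^esub> h) \<otimes>\<^bsub>F3\<^esub> h" using e by simp
  then have "gen a \<otimes>\<^bsub>F3\<^esub> k = k \<otimes>\<^bsub>F3\<^esub> gen a"
    using g h x unfolding k_def by (simp add: F3.m_assoc)
  then obtain m :: int where "k = gen a [^]\<^bsub>F3\<^esub> m"
    using centraliser_gen[OF kc a] by metis
  then have "h = g \<otimes>\<^bsub>F3\<^esub> gen a [^]\<^bsub>F3\<^esub> m"
    using g h unfolding k_def
    by (metis F3.inv_solve_left F3.int_pow_closed x)
  then show ?thesis by blast
qed

lemma x1_head_exp_shift: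
  assumes g1: "g1 \<in> carrier F3" and g2: "g2 \<in> carrier F3" and j: "j \<in> {2,3}"
  shows "x1_head_exp (inv\<^bsub>F3\<^esub> (g1 \<otimes>\<^bsub>F3\<^esub> gen 1 [^]\<^bsub>F3\<^esub> (m1::int)) \<otimes>\<^bsub>F3\<^esub> (g2 \<otimes>\<^bsub>F3\<^esub> gen j [^]\<^bsub>F3\<^esub> (m2::int)))
         = - m1 + x1_head_exp (inv\<^bsub>F3\<^esub> g1 \<otimes>\<^bsub>F3\<^esub> g2)"
proof -
  have x1: "gen 1 \<in> carrier F3" by (rule gen_carrier) simp
  have xj: "gen j \<in> carrier F3" using j by (intro gen_carrier) auto
  have "inv\<^bsub>F3\<^esub> (g1 \<otimes>\<^bsub>F3\<^esub> gen 1 [^]\<^bsub>F3\<^esub> m1) \<otimes>\<^bsub>F3\<^esub> (g2 \<otimes>\<^bsub>F3\<^esub> gen j [^]\<^bsub>F3\<^esub> m2)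
      = gen 1 [^]\<^bsub>F3\<^esub> (-m1) \<otimes>\<^bsub>F3\<^esub> ((inv\<^bsub>F3\<^esub> g1 \<otimes>\<^bsub>F3\<^esub> g2) \<otimes>\<^bsub>F3\<^esub> gen j [^]\<^bsub>F3\<^esub> m2)"
    using g1 g2 x1 xj by (simp add: F3.inv_mult_group F3.int_pow_neg F3.m_assoc)
  moreover have "x1_head_exp (gen 1 [^]\<^bsub>F3\<^esub> (-m1) \<otimes>\<^bsub>F3\<^esub> ((inv\<^bsub>F3\<^esub> g1 \<otimes>\<^bsub>F3\<^esub> g2) \<otimes>\<^bsub>F3\<^esub> gen j [^]\<^bsub>F3\<^esub> m2))
      = - m1 + x1_head_exp ((inv\<^bsub>F3\<^esub> g1 \<otimes>\<^bsub>F3\<^esub> g2) \<otimes>\<^bsub>F3\<^esub> gen j [^]\<^bsub>F3\<^esub> m2)"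
    using x1_head_exp_gen1_pow_mult g1 g2 xj by simp
  moreover have "x1_head_exp ((inv\<^bsub>F3\<^esub> g1 \<otimes>\<^bsub>F3\<^esub> g2) \<otimes>\<^bsub>F3\<^esub> gen j [^]\<^bsub>F3\<^esub> m2) = x1_head_exp (inv\<^bsub>F3\<^esub> g1 \<otimes>\<^bsub>F3\<^esub> g2)"
    using x1_head_exp_mult_gen_pow[OF _ j] g1 g2 by simp
  ultimately show ?thesis by simp
qed

lemma head_exp_gap_well_defined:
  assumes s1: "basis_conj \<omega> g" and s2: "basis_conj \<omega> h"
  shows "head_exp_gap g = head_exp_gap h"
proof -
  have ex: "\<exists>m::int. h a = g a \<otimes>\<^bsub>F3\<^esub> gen a [^]\<^bsub>F3\<^esub> m" if a: "a \<in> {1..3}" for a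
    using conj_gen_eq_imp_right_pow[OF basis_conj_carrier[OF s1 a] basis_conj_carrier[OF s2 a] a] s1 s2 a
    by (simp add: basis_conj_def conj_gen_def)
  obtain m1 :: int where m1: "h 1 = g 1 \<otimes>\<^bsub>F3\<^esub> gen 1 [^]\<^bsub>F3\<^esub> m1"
    using ex[of 1] by auto
  obtain m2 :: int where m2: "h 2 = g 2 \<otimes>\<^bsub>F3\<^esub> gen 2 [^]\<^bsub>F3\<^esub> m2"
    using ex[of 2] by auto
  obtain m3 :: int where m3: "h 3 = g 3 \<otimes>\<^bsub>F3\<^esub> gen 3 [^]\<^bsub>F3\<^esub> m3"
    using ex[of 3] by auto
  have c: "g 1 \<in> carrier F3" "g 2 \<in> carrier F3" "g 3 \<in> carrier F3"
    using basis_conj_carrier[OF s1] by auto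
  show ?thesis unfolding head_exp_gap_def m1 m2 m3
    using x1_head_exp_shift[OF c(1) c(2), of 2 m1 m2] x1_head_exp_shift[OF c(1) c(3), of 3 m1 m3]
    by simp
qed

section \<open>Words in \<xi>_12, \<xi>_21, \<xi>_13\<close>

definition xi_basis :: "nat \<Rightarrow> letter list \<Rightarrow> letter list" where
  "xi_basis a = (if a = 1 then xi 1 2 else if a = 2 then xi 2 1 else xi 1 3)"
definition xi_word :: "letter list \<Rightarrow> letter list \<Rightarrow> letter list" where
  "xi_word W = eval_word AutF3 xi_basis W"

lemma xi_basis_auto: "xi_basis a \<in> auto F3" by (simp add: xi_basis_def xi_auto)
lemma xi_basis_carrier: "xi_basis a \<in> carrier AutF3"
  by (simp add: F3.carrier_AutoGroup xi_basis_auto)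
lemma xi_basis_letters_carrier: "\<forall>l\<in>set w. xi_basis (snd l) \<in> carrier AutF3"
  by (simp add: xi_basis_carrier)

lemma xi_word_Nil: "xi_word [] = \<one>\<^bsub>AutF3\<^esub>" by (simp add: xi_word_def)
lemma xi_word_closed: "xi_word W \<in> carrier AutF3" unfolding xi_word_def
  by (rule Aut.eval_word_closed[OF xi_basis_letters_carrier])
lemma xi_word_auto: "xi_word W \<in> auto F3"
  using xi_word_closed by (simp add: F3.carrier_AutoGroup)
lemma xi_word_append: "xi_word (u @ v) = xi_word u \<otimes>\<^bsub>AutF3\<^esub> xi_word v"
  unfolding xi_word_def
  by (rule Aut.eval_word_append[OF xi_basis_letters_carrier xi_basis_letters_carrier])
lemma xi_word_Cons: "xi_word (l # v) = eval_letter AutF3 xi_basis l \<otimes>\<^bsub>AutF3\<^esub> xi_word v"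
  by (simp add: xi_word_def)
lemma eval_letter_xi_basis_closed: "eval_letter AutF3 xi_basis l \<in> carrier AutF3"
  by (rule Aut.eval_letter_closed[OF xi_basis_carrier])
lemma xi_word_single: "xi_word [l] = eval_letter AutF3 xi_basis l"
  using eval_letter_xi_basis_closed by (simp add: xi_word_def)

lemma eval_letter_xi_basis:
  "eval_letter AutF3 xi_basis (False, 1) = xi 1 2" "eval_letter AutF3 xi_basis (True, 1) = xi_inv 1 2"
  "eval_letter AutF3 xi_basis (False, 2) = xi 2 1" "eval_letter AutF3 xi_basis (True, 2) = xi_inv 2 1"
  "eval_letter AutF3 xi_basis (False, 3) = xi 1 3" "eval_letter AutF3 xi_basis (True, 3) = xi_inv 1 3"
  by (simp_all add: eval_letter_def xi_basis_def xi_auto_inverse)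

lemma xi_basis_inv:
  "inv\<^bsub>AutF3\<^esub> (xi_basis a) = (if a = 1 then xi_inv 1 2 else if a = 2 then xi_inv 2 1 else xi_inv 1 3)"
  by (simp add: xi_basis_def xi_auto_inverse)

lemma xi_word_eq_eval_word: "xi_word = eval_word AutF3 xi_basis"
  by (rule ext) (simp add: xi_word_def)

lemma xi_word_hom: "xi_word \<in> hom F3 AutF3"
  unfolding xi_word_eq_eval_word
  by (rule eval_word_hom[OF group_AutF3]) (simp add: xi_basis_carrier)

interpretation xi_word_AutF3: group_hom F3 AutF3 xi_word
  by (simp add: group_hom_def group_hom_axioms_def group_F3 group_AutF3 xi_word_hom)

lemma basis_conj_block:
  "basis_conj \<omega> g \<Longrightarrow> \<omega> \<in> auto F3 \<Longrightarrow> \<forall>l\<in>set v. snd l \<in> {1,3} \<Longrightarrow>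
    basis_conj (\<omega> \<otimes>\<^bsub>AutF3\<^esub> xi_word v) (g(1 := inv\<^bsub>F3\<^esub> (eval_word F3 (partner_conj g) v) \<otimes>\<^bsub>F3\<^esub> g 1))"
proof (induction v arbitrary: \<omega> g)
  case Nil
  have "\<omega> \<in> carrier AutF3" using Nil by (simp add: F3.carrier_AutoGroup)
  moreover have "g 1 \<in> carrier F3" using Nil basis_conj_carrier by auto
  ultimately show ?case using Nil by (simp add: xi_word_Nil)
next
  case (Cons l v)
  note st = Cons.prems(1) and \<omega> = Cons.prems(2) and vl = Cons.prems(3)
  have gc: "\<forall>a\<in>{1..3}. g a \<in> carrier F3" using st basis_conj_carrier by auto
  have pc_carrier: "partner_conj g a \<in> carrier F3" for a
    using gc by (intro partner_conj_carrier) auto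
  have lc: "eval_letter F3 (partner_conj g) l \<in> carrier F3"
    using pc_carrier by (rule F3.eval_letter_closed)
  define g' where "g' = g(1 := inv\<^bsub>F3\<^esub> (eval_letter F3 (partner_conj g) l) \<otimes>\<^bsub>F3\<^esub> g 1)"
  have sl: "snd l = 1 \<or> snd l = 3" using vl by auto
  have P2: "conj_gen g 2 \<in> carrier F3" "conj_gen g 3 \<in> carrier F3"
    using gc by (auto simp: conj_gen_carrier)
  have st': "basis_conj (\<omega> \<otimes>\<^bsub>AutF3\<^esub> eval_letter AutF3 xi_basis l) g'"
  proof -
    obtain b a where l: "l = (b, a)" by (cases l)
    show ?thesis
    proof (cases b)
      case True
      then show ?thesis
        using sl basis_conj_mult_xi(2)[OF st \<omega>, of 1 2] basis_conj_mult_xi(2)[OF st \<omega>, of 1 3] P2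
        by (auto simp: g'_def l eval_letter_def xi_basis_inv partner_conj_def partner_def)
    next
      case False
      then show ?thesis
        using sl basis_conj_mult_xi(1)[OF st \<omega>, of 1 2] basis_conj_mult_xi(1)[OF st \<omega>, of 1 3] P2
        by (auto simp: g'_def l eval_letter_def xi_basis_def partner_conj_def partner_def)
    qed
  qed
  have \<omega>': "\<omega> \<otimes>\<^bsub>AutF3\<^esub> eval_letter AutF3 xi_basis l \<in> auto F3"
    using Aut.m_closed[of \<omega> "eval_letter AutF3 xi_basis l"] \<omega> eval_letter_xi_basis_closed
    by (simp add: F3.carrier_AutoGroup)
  have partner_conj_upd: "partner_conj g' = partner_conj g"
    by (rule ext) (simp add: partner_conj_def partner_def conj_gen_def g'_def)
  have IH: "basis_conj ((\<omega> \<otimes>\<^bsub>AutF3\<^esub> eval_letter AutF3 xi_basis l) \<otimes>\<^bsub>AutF3\<^esub> xi_word v) (g'(1 := inv\<^bsub>F3\<^esub> (eval_word F3 (partner_conj g) v) \<otimes>\<^bsub>F3\<^esub> g' 1))"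
  proof -
    have "\<forall>l\<in>set v. snd l \<in> {1,3}" using vl by simp
    from Cons.IH[OF st' \<omega>' this] show ?thesis by (simp only: partner_conj_upd)
  qed
  have e1: "(\<omega> \<otimes>\<^bsub>AutF3\<^esub> eval_letter AutF3 xi_basis l) \<otimes>\<^bsub>AutF3\<^esub> xi_word v = \<omega> \<otimes>\<^bsub>AutF3\<^esub> xi_word (l # v)"
    using \<omega> eval_letter_xi_basis_closed xi_word_closed
    by (simp add: xi_word_Cons Aut.m_assoc F3.carrier_AutoGroup)
  have evc: "eval_word F3 (partner_conj g) v \<in> carrier F3"
    using pc_carrier by (simp add: F3.eval_word_closed)
  have e2: "g'(1 := inv\<^bsub>F3\<^esub> (eval_word F3 (partner_conj g) v) \<otimes>\<^bsub>F3\<^esub> g' 1) = g(1 := inv\<^bsub>F3\<^esub> (eval_word F3 (partner_conj g) (l # v)) \<otimes>\<^bsub>F3\<^esub> g 1)"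
    using lc evc gc by (simp add: g'_def F3.inv_mult_group F3.m_assoc)
  from IH show ?case by (simp only: e1 e2)
qed

lemma eval_word_conj:
  assumes c: "c \<in> carrier F3" and f: "\<forall>a. f a \<in> carrier F3"
  shows "inv\<^bsub>F3\<^esub> c \<otimes>\<^bsub>F3\<^esub> eval_word F3 f v \<otimes>\<^bsub>F3\<^esub> c = eval_word F3 (\<lambda>a. inv\<^bsub>F3\<^esub> c \<otimes>\<^bsub>F3\<^esub> f a \<otimes>\<^bsub>F3\<^esub> c) v"
proof -
  have ic: "inv\<^bsub>F3\<^esub> c \<in> carrier F3" using c by simp
  have fv: "\<forall>l\<in>set v. f (snd l) \<in> carrier F3" using f by simp
  have "conj_aut (inv\<^bsub>F3\<^esub> c) (eval_word F3 f v) = eval_word F3 (\<lambda>a. conj_aut (inv\<^bsub>F3\<^esub> c) (f a)) v"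
    by (rule hom_eval_word_comm[OF group_F3 group_F3 conj_aut_endo[OF ic] fv])
  moreover have "conj_aut (inv\<^bsub>F3\<^esub> c) (eval_word F3 f v) = inv\<^bsub>F3\<^esub> c \<otimes>\<^bsub>F3\<^esub> eval_word F3 f v \<otimes>\<^bsub>F3\<^esub> c"
    using F3.eval_word_closed[OF fv] c by (simp add: conj_aut_apply del: inner.hom_inv)
  moreover have "eval_word F3 (\<lambda>a. conj_aut (inv\<^bsub>F3\<^esub> c) (f a)) v = eval_word F3 (\<lambda>a. inv\<^bsub>F3\<^esub> c \<otimes>\<^bsub>F3\<^esub> f a \<otimes>\<^bsub>F3\<^esub> c) v"
    using f c by (intro eval_word_cong) (simp add: conj_aut_apply del: inner.hom_inv)
  ultimately show ?thesis by simp
qed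

text \<open>Conjugating by g 1 turns the block into a word in the conjugates G p x_p (G p)^-1 with
  G k = (g 1)^-1 g k, so x1_head_exp_eval_partner_conj_mult applies with z = G 2 and z = G 3.\<close>

lemma head_exp_gap_block:
  assumes gc: "\<forall>a\<in>{1..3}. g a \<in> carrier F3" and rv: "reduced v" and vne: "v \<noteq> []"
    and vl: "\<forall>l\<in>set v. snd l \<in> {1, 3}"
    and d: "head_exp_gap g \<noteq> 0 \<or> (g 2 = g 1 \<and> g 3 = g 1)"
  shows "head_exp_gap (g(1 := inv\<^bsub>F3\<^esub> (eval_word F3 (partner_conj g) v) \<otimes>\<^bsub>F3\<^esub> g 1)) = 0"
proof -
  have g1: "g 1 \<in> carrier F3" using gc by auto
  have pc_carrier: "\<forall>a. partner_conj g a \<in> carrier F3"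
    using gc by (auto intro: partner_conj_carrier)
  define h where "h = eval_word F3 (partner_conj g) v"
  have hc: "h \<in> carrier F3" unfolding h_def using pc_carrier by (simp add: F3.eval_word_closed)
  define G where "G k = inv\<^bsub>F3\<^esub> (g 1) \<otimes>\<^bsub>F3\<^esub> g k" for k
  have Gc: "\<forall>k\<in>{2, 3}. G k \<in> carrier F3" using gc by (auto simp: G_def)
  have "(\<lambda>a. inv\<^bsub>F3\<^esub> (g 1) \<otimes>\<^bsub>F3\<^esub> partner_conj g a \<otimes>\<^bsub>F3\<^esub> g 1) = partner_conj G"
  proof
    fix a
    have "g (partner a) \<in> carrier F3" "gen (partner a) \<in> carrier F3"
      using gc partner_in[of a] by (auto intro: gen_partner_carrier)
    then show "inv\<^bsub>F3\<^esub> (g 1) \<otimes>\<^bsub>F3\<^esub> partner_conj g a \<otimes>\<^bsub>F3\<^esub> g 1 = partner_conj G a"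
      using g1 by (simp add: partner_conj_def conj_gen_def G_def F3.m_assoc F3.inv_mult_group)
  qed
  then have ht: "inv\<^bsub>F3\<^esub> (g 1) \<otimes>\<^bsub>F3\<^esub> h \<otimes>\<^bsub>F3\<^esub> g 1 = eval_word F3 (partner_conj G) v"
    unfolding h_def using eval_word_conj[OF g1 pc_carrier, of v] by simp
  have new_G: "inv\<^bsub>F3\<^esub> (inv\<^bsub>F3\<^esub> h \<otimes>\<^bsub>F3\<^esub> g 1) \<otimes>\<^bsub>F3\<^esub> g k
      = eval_word F3 (partner_conj G) v \<otimes>\<^bsub>F3\<^esub> G k" if "g k \<in> carrier F3" for k
    using that hc g1 by (simp add: ht[symmetric] G_def F3.inv_mult_group F3.m_assoc)
  have gap: "head_exp_gap (g(1 := inv\<^bsub>F3\<^esub> h \<otimes>\<^bsub>F3\<^esub> g 1))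
      = x1_head_exp (eval_word F3 (partner_conj G) v \<otimes>\<^bsub>F3\<^esub> G 2)
        - x1_head_exp (eval_word F3 (partner_conj G) v \<otimes>\<^bsub>F3\<^esub> G 3)"
    using new_G gc by (simp add: head_exp_gap_def)
  show ?thesis
  proof (cases "head_exp_gap g = 0")
    case False
    then have ne: "x1_head_exp (G 2) \<noteq> x1_head_exp (G 3)"
      by (simp add: head_exp_gap_def G_def)
    have "G (partner (snd (last v))) \<in> {G 2, G 3}" by (simp add: partner_def)
    then have "x1_head_exp (eval_word F3 (partner_conj G) v \<otimes>\<^bsub>F3\<^esub> G k)
        = x1_head_exp (G (partner (snd (hd v))))" if "k \<in> {2, 3}" for k
      using that ne Gc
      by (intro x1_head_exp_eval_partner_conj_mult[OF Gc ne rv vne vl])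
        (auto intro!: exI[of _ 0] simp: partner_def)
    then show ?thesis using gap h_def by simp
  qed (use d gap h_def G_def in simp)
qed
definition x2_tail_exp :: "letter list \<Rightarrow> int" where
  "x2_tail_exp W = sum_list (map letter_sign (takeWhile (\<lambda>l. snd l = 2) (rev W)))"

lemma reduced_rev: "reduced w \<Longrightarrow> reduced (rev w)"
proof (induction w)
  case Nil then show ?case by simp
next
  case (Cons l w)
  then have rw: "reduced w" and h: "w = [] \<or> \<not> inv_pair l (hd w)"
    by (auto simp: reduced_Cons)
  have "w \<noteq> [] \<Longrightarrow> last (rev w) = hd w" by (simp add: last_rev)
  then show ?case using Cons.IH[OF rw] h by (auto simp: reduced_append inv_pair_sym)
qed

lemma x2_tail_exp_nonzero:
  assumes r: "reduced W" and ne: "W \<noteq> []" and l: "snd (last W) = 2"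
  shows "x2_tail_exp W \<noteq> 0"
proof -
  let ?t = "takeWhile (\<lambda>l. snd l = 2) (rev W)"
  have rr: "reduced (rev W)" using r by (rule reduced_rev)
  have "reduced ?t"
    using rr reduced_append[of ?t "dropWhile (\<lambda>l. snd l = 2) (rev W)"] by simp
  moreover have "\<forall>l\<in>set ?t. snd l = 2" by (meson set_takeWhileD)
  ultimately have s: "x2_tail_exp W = letter_sign (hd ?t) * int (length ?t)"
    unfolding x2_tail_exp_def
    by (rule sum_letter_sign_one_letter)
  obtain W0 l0 where W: "W = W0 @ [l0]" using ne by (metis append_butlast_last_id)
  then have "?t \<noteq> []" using l by simp
  moreover have "letter_sign (hd ?t) \<noteq> 0" by (simp add: letter_sign_def)
  ultimately show ?thesis using s by simp
qed

lemma x2_tail_exp_zero: "W \<noteq> [] \<Longrightarrow> snd (last W) \<noteq> 2 \<Longrightarrow> x2_tail_exp W = 0"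
proof -
  assume ne: "W \<noteq> []" and l: "snd (last W) \<noteq> 2"
  obtain W0 l0 where W: "W = W0 @ [l0]" using ne by (metis append_butlast_last_id)
  then show ?thesis using l by (simp add: x2_tail_exp_def)
qed

lemma x2_tail_exp_snoc: "snd l = 2 \<Longrightarrow> x2_tail_exp (W @ [l]) = letter_sign l + x2_tail_exp W"
  by (simp add: x2_tail_exp_def)

lemma carrier_append: "u @ v \<in> carrier F3 \<Longrightarrow> u \<in> carrier F3 \<and> v \<in> carrier F3"
  by (auto simp: carrier_FreeGroup reduced_append)

lemma head_exp_gap_mult_conj_gen1:
  assumes gc: "\<forall>a\<in>{1..3}. g a \<in> carrier F3"
  shows "head_exp_gap (g(2 := inv\<^bsub>F3\<^esub> (conj_gen g 1) \<otimes>\<^bsub>F3\<^esub> g 2)) = head_exp_gap g - 1"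
    and "head_exp_gap (g(2 := conj_gen g 1 \<otimes>\<^bsub>F3\<^esub> g 2)) = head_exp_gap g + 1"
proof -
  have g1: "g 1 \<in> carrier F3" and g2: "g 2 \<in> carrier F3" using gc by auto
  have x1: "gen 1 \<in> carrier F3" by (simp add: gen_carrier)
  have y: "inv\<^bsub>F3\<^esub> (g 1) \<otimes>\<^bsub>F3\<^esub> g 2 \<in> carrier F3"
    using g1 g2 by simp
  have "inv\<^bsub>F3\<^esub> (g 1) \<otimes>\<^bsub>F3\<^esub> (inv\<^bsub>F3\<^esub> (conj_gen g 1) \<otimes>\<^bsub>F3\<^esub> g 2)
      = gen 1 [^]\<^bsub>F3\<^esub> (- 1 :: int) \<otimes>\<^bsub>F3\<^esub> (inv\<^bsub>F3\<^esub> (g 1) \<otimes>\<^bsub>F3\<^esub> g 2)"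
    using g1 g2 x1 F3.int_pow_neg[OF x1, of 1]
    by (simp add: conj_gen_def F3.inv_mult_group F3.m_assoc)
  then show "head_exp_gap (g(2 := inv\<^bsub>F3\<^esub> (conj_gen g 1) \<otimes>\<^bsub>F3\<^esub> g 2)) = head_exp_gap g - 1"
    using x1_head_exp_gen1_pow_mult[OF y] by (simp add: head_exp_gap_def)
  have "inv\<^bsub>F3\<^esub> (g 1) \<otimes>\<^bsub>F3\<^esub> (conj_gen g 1 \<otimes>\<^bsub>F3\<^esub> g 2)
      = gen 1 [^]\<^bsub>F3\<^esub> (1 :: int) \<otimes>\<^bsub>F3\<^esub> (inv\<^bsub>F3\<^esub> (g 1) \<otimes>\<^bsub>F3\<^esub> g 2)"
    using g1 g2 x1 by (simp add: conj_gen_def F3.m_assoc)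
  then show "head_exp_gap (g(2 := conj_gen g 1 \<otimes>\<^bsub>F3\<^esub> g 2)) = head_exp_gap g + 1"
    using x1_head_exp_gen1_pow_mult[OF y] by (simp add: head_exp_gap_def)
qed

lemma basis_conj_xi_word_snoc2:
  assumes st: "basis_conj (xi_word W) g" and l: "snd l = 2"
  obtains g' where "basis_conj (xi_word (W @ [l])) g'"
    and "head_exp_gap g' = head_exp_gap g - letter_sign l"
proof -
  have gc: "\<forall>a\<in>{1..3}. g a \<in> carrier F3" using st basis_conj_carrier by auto
  have PW: "xi_word (W @ [l]) = xi_word W \<otimes>\<^bsub>AutF3\<^esub> eval_letter AutF3 xi_basis l"
    by (simp add: xi_word_append xi_word_single)
  show ?thesis
  proof (cases "fst l")
    case True
    then have l: "l = (True, 2)" using l by (cases l) auto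
    have "basis_conj (xi_word (W @ [l])) (g(2 := conj_gen g 1 \<otimes>\<^bsub>F3\<^esub> g 2))"
      using basis_conj_mult_xi(2)[OF st xi_word_auto, of 2 1] PW l
      by (simp add: eval_letter_xi_basis)
    moreover have "head_exp_gap (g(2 := conj_gen g 1 \<otimes>\<^bsub>F3\<^esub> g 2)) = head_exp_gap g - letter_sign l"
      using head_exp_gap_mult_conj_gen1(2)[OF gc] l by (simp add: letter_sign_def)
    ultimately show ?thesis by (rule that)
  next
    case False
    then have l: "l = (False, 2)" using l by (cases l) auto
    have "basis_conj (xi_word (W @ [l])) (g(2 := inv\<^bsub>F3\<^esub> (conj_gen g 1) \<otimes>\<^bsub>F3\<^esub> g 2))"
      using basis_conj_mult_xi(1)[OF st xi_word_auto, of 2 1] PW l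
      by (simp add: eval_letter_xi_basis)
    moreover have "head_exp_gap (g(2 := inv\<^bsub>F3\<^esub> (conj_gen g 1) \<otimes>\<^bsub>F3\<^esub> g 2)) = head_exp_gap g - letter_sign l"
      using head_exp_gap_mult_conj_gen1(1)[OF gc] l by (simp add: letter_sign_def)
    ultimately show ?thesis by (rule that)
  qed
qed

lemma split_last_block:
  fixes W :: "letter list"
  assumes "W \<noteq> []" "snd (last W) \<noteq> 2"
  obtains V v where "W = V @ v" "v \<noteq> []" "\<forall>l\<in>set v. snd l \<noteq> 2" "V \<noteq> [] \<Longrightarrow> snd (last V) = 2"
proof -
  define P where "P = (\<lambda>l::letter. snd l \<noteq> 2)"
  define v where "v = rev (takeWhile P (rev W))"
  define V where "V = rev (dropWhile P (rev W))"
  have "W = V @ v" unfolding v_def V_def by (metis rev_append rev_rev_ident takeWhile_dropWhile_id)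
  moreover have "v \<noteq> []" unfolding v_def P_def using assms by (cases W rule: rev_cases) auto
  moreover have "\<forall>l\<in>set v. snd l \<noteq> 2" unfolding v_def P_def
    by (auto dest: set_takeWhileD)
  moreover have "snd (last V) = 2" if "V \<noteq> []"
  proof -
    have ne: "dropWhile P (rev W) \<noteq> []" using that unfolding V_def by simp
    have "last V = hd (dropWhile P (rev W))" unfolding V_def using ne by (simp add: last_rev)
    then show ?thesis using hd_dropWhile[OF ne] by (simp add: P_def)
  qed
  ultimately show ?thesis using that by blast
qed

lemma basis_conj_xi_word_append_block:
  assumes st: "basis_conj (xi_word V) g" and d: "head_exp_gap g \<noteq> 0 \<or> (g 2 = g 1 \<and> g 3 = g 1)"
    and vc: "v \<in> carrier F3" and v: "v \<noteq> []" "\<forall>l\<in>set v. snd l \<noteq> 2"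
  obtains g' where "basis_conj (xi_word (V @ v)) g'" "head_exp_gap g' = 0"
proof -
  have rv: "reduced v" using vc by (simp add: carrier_FreeGroup)
  have vl: "\<forall>l\<in>set v. snd l \<in> {1, 3}"
  proof
    fix x assume "x \<in> set v"
    then have "snd x \<in> {1..3}" "snd x \<noteq> 2"
      using vc v(2) by (auto simp: carrier_FreeGroup)
    then show "snd x \<in> {1, 3}" by auto
  qed
  have gc: "\<forall>a\<in>{1..3}. g a \<in> carrier F3" using st basis_conj_carrier by auto
  show ?thesis
    using that basis_conj_block[OF st xi_word_auto vl] head_exp_gap_block[OF gc rv v(1) vl d]
    by (simp add: xi_word_append)
qed

text \<open>A final letter x_2^\<epsilon> lowers the invariant by \<epsilon>, and a final block of letters 1 and 3
  resets it to 0.\<close>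

lemma basis_conj_xi_word:
  "W \<in> carrier F3 \<Longrightarrow> \<exists>g. basis_conj (xi_word W) g \<and> head_exp_gap g = - x2_tail_exp W"
proof (induction "length W" arbitrary: W rule: less_induct)
  case less
  show ?case
  proof (cases "W = []")
    case True
    then show ?thesis using basis_conj_one head_exp_gap_const[of "\<one>\<^bsub>F3\<^esub>"]
      by (auto simp: xi_word_Nil x2_tail_exp_def)
  next
    case False
    show ?thesis
    proof (cases "snd (last W) = 2")
      case True
      obtain W0 l where W: "W = W0 @ [l]" using False by (cases W rule: rev_cases) auto
      then have "W0 \<in> carrier F3" using less.prems carrier_append by blast
      then obtain g0 where g0: "basis_conj (xi_word W0) g0" "head_exp_gap g0 = - x2_tail_exp W0"
        using less.hyps W by auto
      have l2: "snd l = 2" using True W by simp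
      obtain g where "basis_conj (xi_word W) g" "head_exp_gap g = head_exp_gap g0 - letter_sign l"
        using basis_conj_xi_word_snoc2[OF g0(1) l2] W by blast
      then show ?thesis using g0(2) x2_tail_exp_snoc[OF l2, of W0] W by auto
    next
      case False
      obtain V v where WV: "W = V @ v" and v: "v \<noteq> []" "\<forall>l\<in>set v. snd l \<noteq> 2"
        and V: "V \<noteq> [] \<Longrightarrow> snd (last V) = 2"
        using split_last_block[OF \<open>W \<noteq> []\<close> False] by blast
      have Vc: "V \<in> carrier F3" and vc: "v \<in> carrier F3"
        using carrier_append[of V v] WV less.prems by simp_all
      obtain g0 where st0: "basis_conj (xi_word V) g0"
        and d0: "head_exp_gap g0 \<noteq> 0 \<or> (g0 2 = g0 1 \<and> g0 3 = g0 1)"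
      proof (cases "V = []")
        case True
        then show ?thesis
          using that[of "\<lambda>a. \<one>\<^bsub>F3\<^esub>"] basis_conj_one
          by (simp add: xi_word_Nil)
      next
        case False
        obtain g0 where "basis_conj (xi_word V) g0" "head_exp_gap g0 = - x2_tail_exp V"
          using less.hyps[of V] Vc WV v by auto
        moreover have "x2_tail_exp V \<noteq> 0"
          using x2_tail_exp_nonzero[OF _ False V[OF False]] Vc by (simp add: carrier_FreeGroup)
        ultimately show ?thesis using that by simp
      qed
      obtain g where "basis_conj (xi_word W) g" "head_exp_gap g = 0"
        using basis_conj_xi_word_append_block[OF st0 d0 vc v] WV by blast
      moreover have "x2_tail_exp W = 0"
        using x2_tail_exp_zero \<open>W \<noteq> []\<close> False by blast
      ultimately show ?thesis by auto
    qed
  qed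
qed

lemma xi_word_ending_x2_not_inner:
  assumes Wc: "W \<in> carrier F3" and ne: "W \<noteq> []" and l: "snd (last W) = 2" and t: "t \<in> carrier F3"
  shows "xi_word W \<noteq> conj_aut t"
proof
  assume e: "xi_word W = conj_aut t"
  obtain g where st: "basis_conj (xi_word W) g" and d: "head_exp_gap g = - x2_tail_exp W"
    using basis_conj_xi_word[OF Wc] by auto
  have "head_exp_gap g = head_exp_gap (\<lambda>a. t)"
    using head_exp_gap_well_defined[OF st] basis_conj_conj_aut[OF t] e by simp
  then have "x2_tail_exp W = 0" using d head_exp_gap_const[OF t] by simp
  moreover have "x2_tail_exp W \<noteq> 0"
    using x2_tail_exp_nonzero[OF _ ne l] Wc by (simp add: carrier_FreeGroup)
  ultimately show False by simp
qed

lemma conj_gen2_ends_x2: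
  assumes Wc: "W \<in> carrier F3" and ne: "W \<noteq> []" and l: "snd (last W) \<noteq> 2"
  defines "W' \<equiv> gen 2 \<otimes>\<^bsub>F3\<^esub> W \<otimes>\<^bsub>F3\<^esub> inv\<^bsub>F3\<^esub> (gen 2)"
  shows "W' \<noteq> [] \<and> last W' = (True, 2)"
proof -
  have x2: "gen 2 \<in> carrier F3" by (simp add: gen_carrier)
  have rW: "reduced W" using Wc by (simp add: carrier_FreeGroup)
  have i2: "inv\<^bsub>F3\<^esub> (gen 2) = [(True, 2)]" by (simp add: inv_gen)
  have a1: "W \<otimes>\<^bsub>F3\<^esub> inv\<^bsub>F3\<^esub> (gen 2) = W @ [(True, 2)]"
    unfolding i2 mult_FreeGroup
    using red_snoc[OF rW, of "(True, 2)"] l ne by (auto simp: inv_pair_def)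
  have rW2: "reduced (W @ [(True, 2)])" using l ne rW by (auto simp: reduced_append inv_pair_def)
  have "W' = gen 2 \<otimes>\<^bsub>F3\<^esub> (W @ [(True, 2)])"
    unfolding W'_def using x2 Wc a1 by (simp add: F3.m_assoc)
  also have "\<dots> = cancel_cons (False, 2) (W @ [(True, 2)])"
    using red_reduced[OF rW2] by (simp add: mult_FreeGroup gen_def)
  finally show ?thesis using ne by (cases W) (auto simp: cancel_cons_def)
qed

lemma xi_word_not_inner:
  assumes Wc: "W \<in> carrier F3" and ne: "W \<noteq> []" and t: "t \<in> carrier F3"
  shows "xi_word W \<noteq> conj_aut t"
proof (cases "snd (last W) = 2")
  case True then show ?thesis by (rule xi_word_ending_x2_not_inner[OF Wc ne _ t])
next
  case False
  define W' where "W' = gen 2 \<otimes>\<^bsub>F3\<^esub> W \<otimes>\<^bsub>F3\<^esub> inv\<^bsub>F3\<^esub> (gen 2)"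
  have x2: "gen 2 \<in> carrier F3" by (simp add: gen_carrier)
  have W': "W' \<in> carrier F3" "W' \<noteq> []" "snd (last W') = 2"
    using conj_gen2_ends_x2[OF Wc ne False] x2 Wc by (auto simp: W'_def)
  have xa: "xi 2 1 \<in> auto F3" by (simp add: xi_auto)
  have c: "xi 2 1 t \<in> carrier F3" using xa t by (rule F3.auto_closed)
  show ?thesis
  proof
    assume e: "xi_word W = conj_aut t"
    have "xi_word (gen 2) = xi 2 1" by (simp add: gen_def xi_word_single eval_letter_xi_basis)
    then have "xi_word W' = xi 2 1 \<otimes>\<^bsub>AutF3\<^esub> conj_aut t \<otimes>\<^bsub>AutF3\<^esub> inv\<^bsub>AutF3\<^esub> (xi 2 1)"
      unfolding W'_def using x2 Wc e by simp
    also have "\<dots> = conj_aut (xi 2 1 t)" by (rule AutF3_conj_conj_aut[OF xa t])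
    finally show False using xi_word_ending_x2_not_inner[OF W' c] by simp
  qed
qed
section \<open>The quotient OP\<Sigma>_3\<close>

lemma xi_basis_in_PSigma3: "xi_basis a \<in> carrier PSigma3"
  by (simp add: xi_basis_def xi_in_PSigma3)

lemma eval_letter_xi_basis_in_PSigma3: "eval_letter AutF3 xi_basis l \<in> carrier PSigma3"
  using xi_basis_in_PSigma3[of "snd l"] P.inv_closed[OF xi_basis_in_PSigma3[of "snd l"]] inv_PSigma3[OF xi_basis_in_PSigma3[of "snd l"]]
  by (simp add: eval_letter_def)

lemma xi_word_in_PSigma3: "xi_word W \<in> carrier PSigma3"
proof (induction W)
  case Nil then show ?case using P.one_closed by (simp add: xi_word_Nil)
next
  case (Cons l W)
  then show ?case
    using P.m_closed[OF eval_letter_xi_basis_in_PSigma3 Cons.IH] by (simp add: xi_word_Cons)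
qed

lemma xi_word_hom_PSigma3: "xi_word \<in> hom F3 PSigma3"
  by (rule homI) (simp_all add: xi_word_in_PSigma3)

interpretation xi_word_PSigma3: group_hom F3 PSigma3 xi_word
  by (simp add: group_hom_def group_hom_axioms_def group_F3 group_PSigma3 xi_word_hom_PSigma3)

interpretation V3N: normal V3 PSigma3 by (rule V3_normal)

lemma group_OPSigma3: "group OPSigma3" unfolding OPSigma3_def by (rule V3N.factorgroup_is_group)

definition xi_coset :: "letter list \<Rightarrow> (letter list \<Rightarrow> letter list) set" where
  "xi_coset W = V3 #>\<^bsub>PSigma3\<^esub> xi_word W"

lemma coset_map_hom: "(\<lambda>a. V3 #>\<^bsub>PSigma3\<^esub> a) \<in> hom PSigma3 OPSigma3"
  unfolding OPSigma3_def by (rule V3N.r_coset_hom_Mod)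

interpretation quot: group_hom PSigma3 OPSigma3 "\<lambda>a. V3 #>\<^bsub>PSigma3\<^esub> a"
  by (simp add: group_hom_def group_hom_axioms_def group_PSigma3 group_OPSigma3 coset_map_hom)

lemma xi_coset_hom: "xi_coset \<in> hom F3 OPSigma3"
proof -
  have "(\<lambda>a. V3 #>\<^bsub>PSigma3\<^esub> a) \<circ> xi_word \<in> hom F3 OPSigma3"
    by (rule hom_compose[OF xi_word_hom_PSigma3 coset_map_hom])
  moreover have "xi_coset = (\<lambda>a. V3 #>\<^bsub>PSigma3\<^esub> a) \<circ> xi_word"
    by (rule ext) (simp add: xi_coset_def)
  ultimately show ?thesis by simp
qed

interpretation xi_coset: group_hom F3 OPSigma3 xi_coset
  by (simp add: group_hom_def group_hom_axioms_def group_F3 group_OPSigma3 xi_coset_hom)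

lemma xi_word_gen: "xi_word (gen 1) = xi 1 2" "xi_word (gen 2) = xi 2 1" "xi_word (gen 3) = xi 1 3"
  by (simp_all add: gen_def xi_word_single eval_letter_def xi_basis_def)

lemma xi_coset_gen:
  "xi_coset (gen 1) = V3 #>\<^bsub>PSigma3\<^esub> xi 1 2" "xi_coset (gen 2) = V3 #>\<^bsub>PSigma3\<^esub> xi 2 1"
  "xi_coset (gen 3) = V3 #>\<^bsub>PSigma3\<^esub> xi 1 3"
  by (simp_all only: xi_coset_def xi_word_gen)

lemma V3_subgroup: "subgroup V3 PSigma3" by (rule V3N.subgroup_axioms)

lemma xi_word_in_V3_imp_one:
  "W \<in> carrier F3 \<Longrightarrow> xi_word W \<in> V3 \<Longrightarrow> W = \<one>\<^bsub>F3\<^esub>"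
proof -
  assume W: "W \<in> carrier F3" and v: "xi_word W \<in> V3"
  then obtain t where t: "t \<in> carrier F3" and e: "xi_word W = conj_aut t"
    using V3_eq_conj_aut_image by auto
  show "W = \<one>\<^bsub>F3\<^esub>"
  proof (rule ccontr)
    assume "W \<noteq> \<one>\<^bsub>F3\<^esub>"
    then have "W \<noteq> []" by (simp add: one_FreeGroup)
    then show False using xi_word_not_inner[OF W _ t] e by simp
  qed
qed

lemma xi_coset_inj: "inj_on xi_coset (carrier F3)"
proof -
  have "kernel F3 OPSigma3 xi_coset = {\<one>\<^bsub>F3\<^esub>}"
  proof
    show "kernel F3 OPSigma3 xi_coset \<subseteq> {\<one>\<^bsub>F3\<^esub>}"
    proof
      fix W assume "W \<in> kernel F3 OPSigma3 xi_coset"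
      then have W: "W \<in> carrier F3" and e: "V3 #>\<^bsub>PSigma3\<^esub> xi_word W = V3"
        by (auto simp: kernel_def xi_coset_def OPSigma3_def)
      have "xi_word W \<in> V3 #>\<^bsub>PSigma3\<^esub> xi_word W"
        by (rule P.rcos_self[OF xi_word_in_PSigma3 V3_subgroup])
      then have "xi_word W \<in> V3" using e by simp
      then show "W \<in> {\<one>\<^bsub>F3\<^esub>}" using xi_word_in_V3_imp_one[OF W] by simp
    qed
  next
    show "{\<one>\<^bsub>F3\<^esub>} \<subseteq> kernel F3 OPSigma3 xi_coset"
      by (auto simp: kernel_def)
  qed
  then show ?thesis by (simp add: xi_coset.inj_iff_trivial_ker)
qed

lemma nu_in_V3: "nu 1 \<in> V3" "nu 2 \<in> V3" "nu 3 \<in> V3"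
  by (simp_all add: V3_eq_generate_PSigma3 NU_def generate.incl)

lemma V3_coset_eq_one: "x \<in> V3 \<Longrightarrow> V3 #>\<^bsub>PSigma3\<^esub> x = \<one>\<^bsub>OPSigma3\<^esub>"
  by (simp add: OPSigma3_def V3N.rcos_const group_PSigma3)

lemma coset_eq_inv_coset:
  assumes a: "a \<in> carrier PSigma3" and b: "b \<in> carrier PSigma3" and ab: "a \<otimes>\<^bsub>AutF3\<^esub> b \<in> V3"
  shows "V3 #>\<^bsub>PSigma3\<^esub> a = inv\<^bsub>OPSigma3\<^esub> (V3 #>\<^bsub>PSigma3\<^esub> b)"
proof -
  have "(V3 #>\<^bsub>PSigma3\<^esub> a) \<otimes>\<^bsub>OPSigma3\<^esub> (V3 #>\<^bsub>PSigma3\<^esub> b) = \<one>\<^bsub>OPSigma3\<^esub>"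
    using quot.hom_mult[OF a b] V3_coset_eq_one[OF ab] by simp
  then show ?thesis using group.inv_equality[OF group_OPSigma3] quot.hom_closed a b by metis
qed

lemma coset_xi_in_image: "h \<in> XI \<Longrightarrow> V3 #>\<^bsub>PSigma3\<^esub> h \<in> xi_coset ` carrier F3"
proof -
  assume "h \<in> XI"
  then obtain i j where h: "h = xi i j" and i: "i \<in> {1..3}" and j: "j \<in> {1..3}" and ij: "i \<noteq> j"
    by (auto simp: XI_def)
  have g: "gen 1 \<in> carrier F3" "gen 2 \<in> carrier F3" "gen 3 \<in> carrier F3"
    by (auto intro: gen_carrier)
  have I: "xi_coset ` carrier F3 \<subseteq> carrier OPSigma3" using xi_coset.hom_closed by auto
  have inv_img: "inv\<^bsub>OPSigma3\<^esub> (xi_coset x) \<in> xi_coset ` carrier F3" if "x \<in> carrier F3" for x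
    using that xi_coset.hom_inv[OF that] F3.inv_closed[OF that] by (metis image_eqI)
  have cases6: "(i = 1 \<and> j = 2) \<or> (i = 2 \<and> j = 1) \<or> (i = 1 \<and> j = 3) \<or> (i = 3 \<and> j = 1) \<or> (i = 2 \<and> j = 3) \<or> (i = 3 \<and> j = 2)"
    using i j ij by auto
  have xp: "xi 1 2 \<in> carrier PSigma3" "xi 2 1 \<in> carrier PSigma3" "xi 1 3 \<in> carrier PSigma3"
    "xi 3 1 \<in> carrier PSigma3" "xi 2 3 \<in> carrier PSigma3" "xi 3 2 \<in> carrier PSigma3"
    by (simp_all add: xi_in_PSigma3)
  have c1: "V3 #>\<^bsub>PSigma3\<^esub> xi 1 2 \<in> xi_coset ` carrier F3"
    using xi_coset_gen(1) g by (metis image_eqI)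
  have c2: "V3 #>\<^bsub>PSigma3\<^esub> xi 2 1 \<in> xi_coset ` carrier F3"
    using xi_coset_gen(2) g by (metis image_eqI)
  have c3: "V3 #>\<^bsub>PSigma3\<^esub> xi 1 3 \<in> xi_coset ` carrier F3"
    using xi_coset_gen(3) g by (metis image_eqI)
  have c4: "V3 #>\<^bsub>PSigma3\<^esub> xi 3 1 \<in> xi_coset ` carrier F3"
    using coset_eq_inv_coset[OF xp(4) xp(2)] nu_eq_xi_mult(1) nu_in_V3(1) inv_img[OF g(2)] xi_coset_gen(2)
    by simp
  have c5: "V3 #>\<^bsub>PSigma3\<^esub> xi 3 2 \<in> xi_coset ` carrier F3"
    using coset_eq_inv_coset[OF xp(6) xp(1)] nu_eq_xi_mult(2) nu_in_V3(2) inv_img[OF g(1)] xi_coset_gen(1)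
    by simp
  have c6: "V3 #>\<^bsub>PSigma3\<^esub> xi 2 3 \<in> xi_coset ` carrier F3"
    using coset_eq_inv_coset[OF xp(5) xp(3)] nu_eq_xi_mult(3) nu_in_V3(3) inv_img[OF g(3)] xi_coset_gen(3)
    by simp
  show ?thesis using cases6 c1 c2 c3 c4 c5 c6 h by auto
qed

lemma xi_coset_surj: "xi_coset ` carrier F3 = carrier OPSigma3"
proof
  show "xi_coset ` carrier F3 \<subseteq> carrier OPSigma3" using xi_coset.hom_closed by auto
next
  have XI_P: "XI \<subseteq> carrier PSigma3" using xi_in_PSigma3 by (auto simp: XI_def)
  have "generate PSigma3 XI = carrier PSigma3"
    using Aut.generate_consistent[OF XI_P subgroup_PSigma3] PSigma3_is_restriction carrier_PSigma3
    by metis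
  then have "carrier OPSigma3 = generate OPSigma3 ((\<lambda>a. V3 #>\<^bsub>PSigma3\<^esub> a) ` XI)"
    using quot.generate_img[OF XI_P] by (auto simp: OPSigma3_def carrier_FactGroup RCOSETS_def)
  also have "\<dots> \<subseteq> xi_coset ` carrier F3"
    by (rule group.generate_subgroup_incl[OF group_OPSigma3 _ xi_coset.img_is_subgroup])
      (use coset_xi_in_image in auto)
  finally show "carrier OPSigma3 \<subseteq> xi_coset ` carrier F3" .
qed

lemma xi_coset_iso: "xi_coset \<in> iso F3 OPSigma3"
  using xi_coset_hom xi_coset_inj xi_coset_surj by (simp add: iso_def bij_betw_def)

section \<open>The complement and the action on V_3^ab\<close>

lemma xi_word_image_subgroup: "subgroup (xi_word ` carrier F3) PSigma3"
  by (rule xi_word_PSigma3.img_is_subgroup)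

lemma xi_word_image_inter_V3: "xi_word ` carrier F3 \<inter> V3 = {\<one>\<^bsub>PSigma3\<^esub>}"
proof
  show "xi_word ` carrier F3 \<inter> V3 \<subseteq> {\<one>\<^bsub>PSigma3\<^esub>}"
  proof
    fix x assume "x \<in> xi_word ` carrier F3 \<inter> V3"
    then obtain W where W: "W \<in> carrier F3" and x: "x = xi_word W" and v: "xi_word W \<in> V3"
      by auto
    have "W = \<one>\<^bsub>F3\<^esub>" by (rule xi_word_in_V3_imp_one[OF W v])
    then show "x \<in> {\<one>\<^bsub>PSigma3\<^esub>}" using x xi_word_PSigma3.hom_one by simp
  qed
next
  have "\<one>\<^bsub>PSigma3\<^esub> \<in> xi_word ` carrier F3"
    using xi_word_PSigma3.hom_one F3.one_closed by (metis image_eqI)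
  moreover have "\<one>\<^bsub>PSigma3\<^esub> \<in> V3"
    by (rule subgroup.one_closed[OF V3_subgroup])
  ultimately show "{\<one>\<^bsub>PSigma3\<^esub>} \<subseteq> xi_word ` carrier F3 \<inter> V3"
    by simp
qed

lemma V3_mult_xi_word_image: "V3 <#>\<^bsub>PSigma3\<^esub> (xi_word ` carrier F3) = carrier PSigma3"
proof
  show "V3 <#>\<^bsub>PSigma3\<^esub> (xi_word ` carrier F3) \<subseteq> carrier PSigma3"
  proof
    fix x assume "x \<in> V3 <#>\<^bsub>PSigma3\<^esub> (xi_word ` carrier F3)"
    then obtain v w where v: "v \<in> V3" and x: "x = v \<otimes>\<^bsub>PSigma3\<^esub> xi_word w"
      by (auto simp: set_mult_def)
    have "v \<in> carrier PSigma3" using v V3_subset_PSigma3 by auto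
    then show "x \<in> carrier PSigma3" using P.m_closed[OF _ xi_word_in_PSigma3] x by blast
  qed
next
  show "carrier PSigma3 \<subseteq> V3 <#>\<^bsub>PSigma3\<^esub> (xi_word ` carrier F3)"
  proof
    fix g assume g: "g \<in> carrier PSigma3"
    have "V3 #>\<^bsub>PSigma3\<^esub> g \<in> carrier OPSigma3"
      using g by (simp add: OPSigma3_def carrier_FactGroup)
    then obtain W where W: "W \<in> carrier F3" and e: "V3 #>\<^bsub>PSigma3\<^esub> g = xi_coset W"
      using xi_coset_surj by (metis imageE)
    have "g \<in> V3 #>\<^bsub>PSigma3\<^esub> g" by (rule P.rcos_self[OF g V3_subgroup])
    then have "g \<in> V3 #>\<^bsub>PSigma3\<^esub> xi_word W" using e by (simp add: xi_coset_def)
    then obtain v where v: "v \<in> V3" and gv: "g = v \<otimes>\<^bsub>PSigma3\<^esub> xi_word W"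
      by (auto simp: r_coset_def)
    then show "g \<in> V3 <#>\<^bsub>PSigma3\<^esub> (xi_word ` carrier F3)"
      using W by (auto simp: set_mult_def)
  qed
qed

definition F3_derived :: "letter list set" where "F3_derived = derived F3 (carrier F3)"

lemma F3_derived_normal: "F3_derived \<lhd> F3" unfolding F3_derived_def
  by (rule F3.derived_self_is_normal)

interpretation F3D: normal F3_derived F3 by (rule F3_derived_normal)

lemma commutator_in_F3_derived: "x \<in> carrier F3 \<Longrightarrow> y \<in> carrier F3 \<Longrightarrow>
    x \<otimes>\<^bsub>F3\<^esub> y \<otimes>\<^bsub>F3\<^esub> inv\<^bsub>F3\<^esub> x \<otimes>\<^bsub>F3\<^esub> inv\<^bsub>F3\<^esub> y \<in> F3_derived"
  unfolding F3_derived_def derived_def by (rule generate.incl) blast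

lemma auto_mod_derived_if_gens:
  assumes \<sigma>: "\<sigma> \<in> auto F3" and hg: "\<forall>a\<in>{1..3}. \<sigma> (gen a) \<otimes>\<^bsub>F3\<^esub> inv\<^bsub>F3\<^esub> (gen a) \<in> F3_derived"
  shows "t \<in> carrier F3 \<Longrightarrow> \<sigma> t \<otimes>\<^bsub>F3\<^esub> inv\<^bsub>F3\<^esub> t \<in> F3_derived"
proof -
  interpret s: group_hom F3 F3 \<sigma> by (rule F3.auto_group_hom[OF \<sigma>])
  assume "t \<in> carrier F3"
  then have "t \<in> generate F3 (gen ` {1..3})" using carrier_FreeGroup_generate[of 3] by simp
  then show ?thesis
  proof (induction rule: generate.induct)
    case one then show ?case using F3D.one_closed by simp
  next
    case (incl h) then show ?case using hg by auto
  next
    case (inv h)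
    then obtain a where a: "a \<in> {1..3}" and h: "h = gen a" by auto
    have x: "h \<in> carrier F3" using a h by (simp add: gen_carrier)
    have d: "\<sigma> h \<otimes>\<^bsub>F3\<^esub> inv\<^bsub>F3\<^esub> h \<in> F3_derived"
      using hg a h by simp
    have sx: "\<sigma> h \<in> carrier F3" using x by simp
    have "inv\<^bsub>F3\<^esub> h \<otimes>\<^bsub>F3\<^esub> inv\<^bsub>F3\<^esub> (\<sigma> h \<otimes>\<^bsub>F3\<^esub> inv\<^bsub>F3\<^esub> h) \<otimes>\<^bsub>F3\<^esub> inv\<^bsub>F3\<^esub> (inv\<^bsub>F3\<^esub> h) \<in> F3_derived"
      using F3D.inv_op_closed2[OF F3.inv_closed[OF x] F3D.m_inv_closed[OF d]] .
    moreover have "inv\<^bsub>F3\<^esub> h \<otimes>\<^bsub>F3\<^esub> inv\<^bsub>F3\<^esub> (\<sigma> h \<otimes>\<^bsub>F3\<^esub> inv\<^bsub>F3\<^esub> h) \<otimes>\<^bsub>F3\<^esub> inv\<^bsub>F3\<^esub> (inv\<^bsub>F3\<^esub> h)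
        = \<sigma> (inv\<^bsub>F3\<^esub> h) \<otimes>\<^bsub>F3\<^esub> inv\<^bsub>F3\<^esub> (inv\<^bsub>F3\<^esub> h)"
      using x sx by (simp add: F3.inv_mult_group F3.m_assoc)
    ultimately show ?case by simp
  next
    case (eng h1 h2)
    have c: "h1 \<in> carrier F3" "h2 \<in> carrier F3"
      using eng.hyps carrier_FreeGroup_generate[of 3] by auto
    have "\<sigma> (h1 \<otimes>\<^bsub>F3\<^esub> h2) \<otimes>\<^bsub>F3\<^esub> inv\<^bsub>F3\<^esub> (h1 \<otimes>\<^bsub>F3\<^esub> h2)
        = (\<sigma> h1 \<otimes>\<^bsub>F3\<^esub> inv\<^bsub>F3\<^esub> h1) \<otimes>\<^bsub>F3\<^esub> (h1 \<otimes>\<^bsub>F3\<^esub> (\<sigma> h2 \<otimes>\<^bsub>F3\<^esub> inv\<^bsub>F3\<^esub> h2) \<otimes>\<^bsub>F3\<^esub> inv\<^bsub>F3\<^esub> h1)"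
      using c by (simp add: F3.inv_mult_group F3.m_assoc)
    moreover have "h1 \<otimes>\<^bsub>F3\<^esub> (\<sigma> h2 \<otimes>\<^bsub>F3\<^esub> inv\<^bsub>F3\<^esub> h2) \<otimes>\<^bsub>F3\<^esub> inv\<^bsub>F3\<^esub> h1 \<in> F3_derived"
      using F3D.inv_op_closed2[OF c(1) eng.IH(2)] .
    ultimately show ?case using F3D.m_closed[OF eng.IH(1)] by simp
  qed
qed

lemma xi_mod_derived_on_gens:
  assumes i: "i \<in> {1..3}" and j: "j \<in> {1..3}" and ij: "i \<noteq> j"
  shows "\<forall>a\<in>{1..3}. xi i j (gen a) \<otimes>\<^bsub>F3\<^esub> inv\<^bsub>F3\<^esub> (gen a) \<in> F3_derived"
proof
  fix a :: nat assume a: "a \<in> {1..3}"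
  have gi: "gen i \<in> carrier F3" "gen j \<in> carrier F3" "gen a \<in> carrier F3"
    using i j a by (auto intro: gen_carrier)
  show "xi i j (gen a) \<otimes>\<^bsub>F3\<^esub> inv\<^bsub>F3\<^esub> (gen a) \<in> F3_derived"
  proof (cases "a = i")
    case True
    have "xi i j (gen a) = inv\<^bsub>F3\<^esub> (gen j) \<otimes>\<^bsub>F3\<^esub> gen i \<otimes>\<^bsub>F3\<^esub> gen j"
      using True i j ij by (simp add: xi_gen xi_subst_def xi_subst_as_product(1)[symmetric])
    then have "xi i j (gen a) \<otimes>\<^bsub>F3\<^esub> inv\<^bsub>F3\<^esub> (gen a)
        = inv\<^bsub>F3\<^esub> (gen j) \<otimes>\<^bsub>F3\<^esub> gen i \<otimes>\<^bsub>F3\<^esub> inv\<^bsub>F3\<^esub> (inv\<^bsub>F3\<^esub> (gen j)) \<otimes>\<^bsub>F3\<^esub> inv\<^bsub>F3\<^esub> (gen i)"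
      using True gi by simp
    then show ?thesis using commutator_in_F3_derived[OF F3.inv_closed[OF gi(2)] gi(1)] by simp
  next
    case False
    then show ?thesis using i j ij a gi F3D.one_closed by (simp add: xi_gen_other)
  qed
qed

lemma PSigma3_mod_derived:
  assumes g: "g \<in> carrier PSigma3"
  shows "t \<in> carrier F3 \<Longrightarrow> g t \<otimes>\<^bsub>F3\<^esub> inv\<^bsub>F3\<^esub> t \<in> F3_derived"
proof -
  have "g \<in> generate AutF3 XI" using g carrier_PSigma3 by simp
  then show "t \<in> carrier F3 \<Longrightarrow> g t \<otimes>\<^bsub>F3\<^esub> inv\<^bsub>F3\<^esub> t \<in> F3_derived"
  proof (induction arbitrary: t rule: generate.induct)
    case one then show ?case using F3D.one_closed by (simp add: F3.AutoGroup_one)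
  next
    case (incl h)
    then obtain i j where h: "h = xi i j" and i: "i \<in> {1..3}" and j: "j \<in> {1..3}" and ij: "i \<noteq> j"
      by (auto simp: XI_def)
    show ?case
      using auto_mod_derived_if_gens[OF xi_auto[OF i j ij] xi_mod_derived_on_gens[OF i j ij] incl.prems] h
      by simp
  next
    case (inv h)
    then obtain i j where h: "h = xi i j" and i: "i \<in> {1..3}" and j: "j \<in> {1..3}" and ij: "i \<noteq> j"
      by (auto simp: XI_def)
    have ha: "h \<in> auto F3" using h xi_auto[OF i j ij] by simp
    define s where "s = (inv\<^bsub>AutF3\<^esub> h) t"
    have sc: "s \<in> carrier F3" unfolding s_def
      using F3.auto_inv_closed[OF ha] inv.prems by (rule F3.auto_closed)
    have hs: "h s = t" unfolding s_def by (rule F3.AutoGroup_inv_apply[OF ha inv.prems])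
    have hg: "\<forall>a\<in>{1..3}. h (gen a) \<otimes>\<^bsub>F3\<^esub> inv\<^bsub>F3\<^esub> (gen a) \<in> F3_derived"
      using xi_mod_derived_on_gens[OF i j ij] h by simp
    have "h s \<otimes>\<^bsub>F3\<^esub> inv\<^bsub>F3\<^esub> s \<in> F3_derived"
      by (rule auto_mod_derived_if_gens[OF ha hg sc])
    then have "inv\<^bsub>F3\<^esub> (t \<otimes>\<^bsub>F3\<^esub> inv\<^bsub>F3\<^esub> s) \<in> F3_derived"
      using hs F3D.m_inv_closed by simp
    then show ?case using sc inv.prems by (simp add: F3.inv_mult_group s_def)
  next
    case (eng h1 h2)
    have a: "h1 \<in> auto F3" "h2 \<in> auto F3"
      using eng.hyps carrier_PSigma3 PSigma3_auto by auto
    have h2t: "h2 t \<in> carrier F3" using a(2) eng.prems by (rule F3.auto_closed)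
    have "(h1 \<otimes>\<^bsub>AutF3\<^esub> h2) t \<otimes>\<^bsub>F3\<^esub> inv\<^bsub>F3\<^esub> t = (h1 (h2 t) \<otimes>\<^bsub>F3\<^esub> inv\<^bsub>F3\<^esub> (h2 t)) \<otimes>\<^bsub>F3\<^esub> (h2 t \<otimes>\<^bsub>F3\<^esub> inv\<^bsub>F3\<^esub> t)"
      using a eng.prems h2t F3.auto_closed[OF a(1) h2t]
      by (simp add: F3.AutoGroup_mult_apply F3.m_assoc)
    then show ?case using F3D.m_closed[OF eng.IH(1)[OF h2t] eng.IH(2)[OF eng.prems]] by simp
  qed
qed

lemma group_V3grp: "group V3grp"
  unfolding V3grp_def by (rule P.group_subgroup_generated)

interpretation V3_inner: group_hom F3 V3grp conj_aut
  using conj_aut_iso_V3grp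
  by (simp add: group_hom_def group_hom_axioms_def group_F3 group_V3grp iso_def)

lemma derived_V3grp_eq: "derived V3grp (carrier V3grp) = conj_aut ` F3_derived"
  unfolding F3_derived_def
  using V3_inner.derived_img[of "carrier F3"] carrier_V3grp V3_eq_conj_aut_image by simp

lemma PSigma3_commutator_V3_in_derived:
  "\<forall>g \<in> carrier PSigma3. \<forall>v \<in> V3.
     g \<otimes>\<^bsub>PSigma3\<^esub> v \<otimes>\<^bsub>PSigma3\<^esub> inv\<^bsub>PSigma3\<^esub> g \<otimes>\<^bsub>PSigma3\<^esub> inv\<^bsub>PSigma3\<^esub> v
       \<in> derived V3grp (carrier V3grp)"
proof (intro ballI)
  fix g v assume g: "g \<in> carrier PSigma3" and v: "v \<in> V3"
  then obtain t where t: "t \<in> carrier F3" and vt: "v = conj_aut t"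
    using V3_eq_conj_aut_image by auto
  have ga: "g \<in> auto F3" using g by (rule PSigma3_auto)
  have vP: "v \<in> carrier PSigma3" using v V3_subset_PSigma3 by auto
  have gt: "g t \<in> carrier F3" using ga t by (rule F3.auto_closed)
  have "g \<otimes>\<^bsub>PSigma3\<^esub> v \<otimes>\<^bsub>PSigma3\<^esub> inv\<^bsub>PSigma3\<^esub> g = conj_aut (g t)"
    using AutF3_conj_conj_aut[OF ga t] g vt by (simp add: inv_PSigma3)
  moreover have "inv\<^bsub>PSigma3\<^esub> v = conj_aut (inv\<^bsub>F3\<^esub> t)"
    using inv_PSigma3[OF vP] vt t by simp
  ultimately have "g \<otimes>\<^bsub>PSigma3\<^esub> v \<otimes>\<^bsub>PSigma3\<^esub> inv\<^bsub>PSigma3\<^esub> g \<otimes>\<^bsub>PSigma3\<^esub> inv\<^bsub>PSigma3\<^esub> v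
      = conj_aut (g t \<otimes>\<^bsub>F3\<^esub> inv\<^bsub>F3\<^esub> t)"
    using gt t by simp
  moreover have "g t \<otimes>\<^bsub>F3\<^esub> inv\<^bsub>F3\<^esub> t \<in> F3_derived"
    by (rule PSigma3_mod_derived[OF g t])
  ultimately show "g \<otimes>\<^bsub>PSigma3\<^esub> v \<otimes>\<^bsub>PSigma3\<^esub> inv\<^bsub>PSigma3\<^esub> g \<otimes>\<^bsub>PSigma3\<^esub> inv\<^bsub>PSigma3\<^esub> v
       \<in> derived V3grp (carrier V3grp)"
    using derived_V3grp_eq by simp
qed

theorem mainTheorem8:
  shows "V3grp \<cong> FreeGroup 3
    \<and> (\<exists>\<phi> \<in> iso (FreeGroup 3) OPSigma3.
          \<phi> (gen 1) = V3 #>\<^bsub>PSigma3\<^esub> xi 1 2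
        \<and> \<phi> (gen 2) = V3 #>\<^bsub>PSigma3\<^esub> xi 2 1
        \<and> \<phi> (gen 3) = V3 #>\<^bsub>PSigma3\<^esub> xi 1 3)
    \<and> V3 \<lhd> PSigma3
    \<and> (\<exists>H. subgroup H PSigma3 \<and> H \<inter> V3 = {\<one>\<^bsub>PSigma3\<^esub>}
           \<and> V3 <#>\<^bsub>PSigma3\<^esub> H = carrier PSigma3)
    \<and> (\<forall>g \<in> carrier PSigma3. \<forall>v \<in> V3.
          g \<otimes>\<^bsub>PSigma3\<^esub> v \<otimes>\<^bsub>PSigma3\<^esub> inv\<^bsub>PSigma3\<^esub> g \<otimes>\<^bsub>PSigma3\<^esub> inv\<^bsub>PSigma3\<^esub> v
            \<in> derived V3grp (carrier V3grp))"
  using V3grp_iso_F3 xi_coset_iso xi_coset_gen V3_normal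
    xi_word_image_subgroup xi_word_image_inter_V3 V3_mult_xi_word_image
    PSigma3_commutator_V3_in_derived
  by blast

end
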